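(* Let $s\ge1$, $p\in F_{2,2s}$, and let $S(H_p)=(p_H,n_H)$. (1) If $(a,b)\in\mathcal B(p)$, then $p_H\le a$ and $n_H\le b$. (2) If $p\in Q_{2,2s}$, then $p$ has a unique signature and $S(p)=S(H_p)=(\operatorname{rank}H_p,0)$. (3) If there is $(a,b)\in\mathcal B(p)$ with $a+b=p_H+n_H=\operatorname{rank}H_p$, then $p$ has a unique signature and $S(p)=S(H_p)$.
   Context: $F_{2,2s}$ is the space of real binary forms of degree $2s$ in $x,y$. A representation of $p\in F_{2,2s}$ is an expression $p=\sum_{j=1}^r\lambda_j(\alpha_jx+\beta_jy)^{2s}$ with $r\ge0$ (empty sum $=0$), $\alpha_j,\beta_j\in\mathbb R$, $0\ne\lambda_j\in\mathbb R$; it is honest if the linear forms $\alpha_jx+\beta_jy$ are pairwise non-proportional. Its badge is $(a,b)$ where $a=\#\{j:\lambda_j>0\}$, $b=\#\{j:\lambda_j<0\}$. $\mathcal B(p)$ is the set of badges of honest representations of $p$. Badges are ordered by $(a,b)\preceq(c,d)$ iff $a\le c$ and $b\le d$; a signature of $p$ is a minimal element of $\mathcal B(p)$ for $\preceq$, and if there is exactly one signature it is denoted $S(p)$. $Q_{2,2s}$ is the set of all finite sums $\sum_k(\xi_kx+\eta_ky)^{2s}$ with $\xi_k,\eta_k\in\mathbb R$. For $p=\sum_{j=0}^{2s}\binom{2s}{j}a_jx^{2s-j}y^j$, the catalecticant is the quadratic form $H_p(t_0,\dots,t_s)=\sum_{i,j=0}^s a_{i+j}t_it_j$; $S(H_p)$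 is the pair (number of positive eigenvalues, number of negative eigenvalues) of the Hankel matrix $(a_{i+j})_{0\le i,j\le s}$, and $\operatorname{rank}H_p$ is the rank of that matrix. *)

theory Defs
  imports Complex_Main "Jordan_Normal_Form.Char_Poly" "Jordan_Normal_Form.DL_Rank"
begin

text \<open>A binary form p of degree 2s is given by its coefficient sequence a, via
  p(x,y) = sum_{j=0}^{2s} binom(2s,j) a_j x^(2s-j) y^j.
  Only the coefficients a_0..a_{2s} are relevant.\<close>

definition form_eval :: "nat \<Rightarrow> (nat \<Rightarrow> real) \<Rightarrow> real \<Rightarrow> real \<Rightarrow> real" where
  "form_eval s a x y = (\<Sum>j=0..2*s. real ((2*s) choose j) * a j * x ^ (2*s - j) * y ^ j)"

definition is_repr :: "nat \<Rightarrow> (nat \<Rightarrow> real) \<Rightarrow> (real \<times> real \<times> real) list \<Rightarrow> bool" where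
  "is_repr s a R \<longleftrightarrow> (\<forall>t \<in> set R. fst t \<noteq> 0) \<and>
     (\<forall>x y. form_eval s a x y =
        (\<Sum>t\<leftarrow>R. fst t * (fst (snd t) * x + snd (snd t) * y) ^ (2*s)))"

definition proportional :: "real \<times> real \<Rightarrow> real \<times> real \<Rightarrow> bool" where
  "proportional l m \<longleftrightarrow>
     (\<exists>c. fst l = c * fst m \<and> snd l = c * snd m) \<or> (\<exists>c. fst m = c * fst l \<and> snd m = c * snd l)"

definition honest :: "(real \<times> real \<times> real) list \<Rightarrow> bool" where
  "honest R \<longleftrightarrow> (\<forall>i < length R. \<forall>j < length R. i \<noteq> j \<longrightarrow>
      \<not> proportional (snd (R ! i)) (snd (R ! j)))"

definition badge :: "(real \<times> real \<times> real) list \<Rightarrow> nat \<times> nat" where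
  "badge R = (length (filter (\<lambda>t. fst t > 0) R), length (filter (\<lambda>t. fst t < 0) R))"

definition badges :: "nat \<Rightarrow> (nat \<Rightarrow> real) \<Rightarrow> (nat \<times> nat) set" where
  "badges s a = {badge R | R. is_repr s a R \<and> honest R}"

definition badge_le :: "nat \<times> nat \<Rightarrow> nat \<times> nat \<Rightarrow> bool" where
  "badge_le u v \<longleftrightarrow> fst u \<le> fst v \<and> snd u \<le> snd v"

definition signatures :: "nat \<Rightarrow> (nat \<Rightarrow> real) \<Rightarrow> (nat \<times> nat) set" where
  "signatures s a = {u \<in> badges s a. \<forall>v \<in> badges s a. badge_le v u \<longrightarrow> v = u}"

text \<open>Q_{2,2s}: finite sums of 2s-th powers of real linear forms (empty sum allowed).\<close>
definition in_Q :: "nat \<Rightarrow> (nat \<Rightarrow> real) \<Rightarrow> bool" where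
  "in_Q s a \<longleftrightarrow> (\<exists>L :: (real \<times> real) list. \<forall>x y.
      form_eval s a x y = (\<Sum>l\<leftarrow>L. (fst l * x + snd l * y) ^ (2*s)))"

definition hankel :: "nat \<Rightarrow> (nat \<Rightarrow> real) \<Rightarrow> real mat" where
  "hankel s a = mat (s+1) (s+1) (\<lambda>(i,j). a (i+j))"

definition num_pos_eig :: "real mat \<Rightarrow> nat" where
  "num_pos_eig A = (\<Sum>c \<in> {c. c > 0 \<and> eigenvalue A c}. Polynomial.order c (char_poly A))"

definition num_neg_eig :: "real mat \<Rightarrow> nat" where
  "num_neg_eig A = (\<Sum>c \<in> {c. c < 0 \<and> eigenvalue A c}. Polynomial.order c (char_poly A))"

definition sig_H :: "nat \<Rightarrow> (nat \<Rightarrow> real) \<Rightarrow> nat \<times> nat" where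
  "sig_H s a = (num_pos_eig (hankel s a), num_neg_eig (hankel s a))"

definition rank_H :: "nat \<Rightarrow> (nat \<Rightarrow> real) \<Rightarrow> nat" where
  "rank_H s a = vec_space.rank (s+1) (hankel s a)"

end

theory Submission
  imports Defs "Jordan_Normal_Form.Schur_Decomposition"
begin

(*
  A representation p = sum_t lambda_t (alpha_t x + beta_t y)^(2s) turns the catalecticant
  quadratic form into x^T H_p x = sum_t lambda_t (m_t . x)^2, where m_t is the moment vector
  (alpha_t^(s-i) beta_t^i)_i of the t-th linear form.  Everything follows from this identity:
  (1) The form is <= 0 on the orthogonal complement of the m_t with lambda_t > 0, so by an
      inertia argument H_p has at most that many positive eigenvalues; apply this to -p too.
  (2) For p in Q, merging proportional terms yields an honest representation with positive
      coefficients.  Up to s+1 of its moment vectors are independent (Vandermonde), and the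
      form is positive definite on their span, which gives the reverse bound.  If more than s+1
      terms remain, H_p is positive definite, and diagonalising H_p simultaneously with its
      shift yields a representation with only s+1 terms (Gauss quadrature).  So (rank H_p, 0)
      is a badge below all others, i.e. the unique signature.
  (3) A badge attaining the bounds of (1) is likewise the least badge.
*)

lemma sprodc_real: "(v::real vec) \<bullet>c w = v \<bullet> w"
  by (simp add: vec_conjugate_real)

text \<open>Eigenvalues of real symmetric matrices are real: for an eigenvector v of the
  complexified matrix, the Hermitian form v^* A v equals both c |v|^2 and its own conjugate.\<close>
lemma real_sym_complex_eigenvalue_real:
  fixes A :: "real mat" and v :: "complex vec"
  assumes A: "A \<in> carrier_mat n n" and sym: "A\<^sup>T = A"
    and v: "v \<in> carrier_vec n" "v \<noteq> 0\<^sub>v n" and ev: "map_mat complex_of_real A *\<^sub>v v = c \<cdot>\<^sub>v v"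
  shows "Im c = 0"
proof -
  define Ac where "Ac = map_mat complex_of_real A"
  have Avi: "(Ac *\<^sub>v v) $ i = (\<Sum>j<n. of_real (A $$ (i,j)) * v $ j)" if "i < n" for i
    using that v(1) A unfolding Ac_def by (auto simp: scalar_prod_def lessThan_atLeast0)
  define S where "S = (\<Sum>i<n. cnj (v $ i) * (Ac *\<^sub>v v) $ i)"
  have S_eig: "S = c * of_real (\<Sum>i<n. (cmod (v $ i))^2)"
  proof -
    have "S = (\<Sum>i<n. cnj (v $ i) * (c * v $ i))"
      unfolding S_def using v(1) ev by (intro sum.cong) (auto simp: Ac_def)
    also have "\<dots> = c * (\<Sum>i<n. cnj (v $ i) * v $ i)"
      by (simp add: sum_distrib_left algebra_simps)
    also have "(\<Sum>i<n. cnj (v $ i) * v $ i) = of_real (\<Sum>i<n. (cmod (v $ i))^2)"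
      by (simp add: complex_norm_square mult.commute del: of_real_power)
    finally show ?thesis .
  qed
  have S_double: "S = (\<Sum>i<n. \<Sum>j<n. cnj (v $ i) * of_real (A $$ (i,j)) * v $ j)"
    unfolding S_def by (intro sum.cong refl) (simp add: Avi sum_distrib_left mult.assoc)
  have symA: "A $$ (i,j) = A $$ (j,i)" if "i < n" "j < n" for i j
    using that A sym by (metis carrier_matD(1) carrier_matD(2) index_transpose_mat(1))
  \<comment> \<open>By symmetry of A the Hermitian form S is its own conjugate.\<close>
  have "cnj S = (\<Sum>i<n. \<Sum>j<n. v $ i * of_real (A $$ (i,j)) * cnj (v $ j))"
    unfolding S_double by simp
  also have "\<dots> = (\<Sum>j<n. \<Sum>i<n. v $ i * of_real (A $$ (i,j)) * cnj (v $ j))"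
    by (rule sum.swap)
  also have "\<dots> = S"
    unfolding S_double by (intro sum.cong refl) (auto simp: symA mult.commute mult.left_commute)
  finally have "Im S = 0" by (metis cnj.simps(2) neg_equal_zero)
  moreover have "(\<Sum>i<n. (cmod (v $ i))^2) > 0"
  proof -
    from v obtain i where i: "i < n" "v $ i \<noteq> 0" by (metis carrier_vecD eq_vecI index_zero_vec)
    have "(cmod (v $ i))^2 \<le> (\<Sum>i<n. (cmod (v $ i))^2)"
      by (rule member_le_sum) (use i in auto)
    moreover have "(cmod (v $ i))^2 > 0" using i by simp
    ultimately show ?thesis by linarith
  qed
  ultimately show "Im c = 0" unfolding S_eig by simp
qed

text \<open>A real symmetric matrix of positive size has a real eigenvector: the characteristic
  polynomial has a complex root, which is real by the previous lemma.\<close>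
lemma real_sym_eigenvector:
  fixes A :: "real mat"
  assumes A: "A \<in> carrier_mat n n" and sym: "A\<^sup>T = A" and n: "n > 0"
  shows "\<exists>e v. v \<in> carrier_vec n \<and> v \<noteq> 0\<^sub>v n \<and> A *\<^sub>v v = e \<cdot>\<^sub>v v"
proof -
  define Ac where "Ac = map_mat complex_of_real A"
  have Ac: "Ac \<in> carrier_mat n n" using A unfolding Ac_def by auto
  from char_poly_factorized[OF Ac] obtain as where
    cp: "char_poly Ac = (\<Prod>a\<leftarrow>as. [:- a, 1:])" and len: "length as = n" by blast
  then obtain c rest where as: "as = c # rest" using n by (cases as) auto
  have root: "poly (char_poly Ac) c = 0" unfolding cp as by simp
  then obtain v where "eigenvector Ac v c"
    using eigenvalue_root_char_poly[OF Ac] unfolding eigenvalue_def by blast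
  hence "Im c = 0" using real_sym_complex_eigenvalue_real[OF A sym]
    unfolding eigenvector_def Ac_def using A by auto
  hence c: "c = of_real (Re c)" by (simp add: complex_eq_iff)
  have "char_poly Ac = map_poly of_real (char_poly A)"
    unfolding Ac_def by (rule of_real_hom.char_poly_hom[OF A])
  hence "of_real (poly (char_poly A) (Re c)) = (0::complex)"
    using root c by (metis of_real_hom.poly_map_poly)
  hence "eigenvalue A (Re c)" using eigenvalue_root_char_poly[OF A] by simp
  then obtain w where "eigenvector A w (Re c)" unfolding eigenvalue_def by blast
  thus ?thesis unfolding eigenvector_def using A by auto
qed

definition orth_mat :: "nat \<Rightarrow> real mat \<Rightarrow> bool" where
  "orth_mat n P \<longleftrightarrow> P \<in> carrier_mat n n \<and> P\<^sup>T * P = 1\<^sub>m n \<and> P * P\<^sup>T = 1\<^sub>m n"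

lemma orth_matI:
  assumes "P \<in> carrier_mat n n" and "P\<^sup>T * P = 1\<^sub>m n"
  shows "orth_mat n P"
  using assms mat_mult_left_right_inverse[of "P\<^sup>T" n P] unfolding orth_mat_def by auto

lemma orth_mat_mult:
  assumes P: "orth_mat n P" and Q: "orth_mat n Q"
  shows "orth_mat n (P * Q)"
proof (rule orth_matI)
  have Pc: "P \<in> carrier_mat n n" and Qc: "Q \<in> carrier_mat n n"
    and PP: "P\<^sup>T * P = 1\<^sub>m n" and QQ: "Q\<^sup>T * Q = 1\<^sub>m n" using P Q unfolding orth_mat_def by auto
  show "P * Q \<in> carrier_mat n n" using Pc Qc by simp
  have "(P * Q)\<^sup>T * (P * Q) = Q\<^sup>T * (P\<^sup>T * P) * Q" using Pc Qc
    by (simp add: transpose_mult[of _ n n _ n] assoc_mult_mat[of _ n n _ n _ n])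
  thus "(P * Q)\<^sup>T * (P * Q) = 1\<^sub>m n" unfolding PP using Qc QQ by simp
qed

lemma orth_mat_block:
  assumes P: "orth_mat m P"
  shows "orth_mat (Suc m) (four_block_mat (1\<^sub>m 1) (0\<^sub>m 1 m) (0\<^sub>m m 1) P)"
proof (rule orth_matI)
  have Pc: "P \<in> carrier_mat m m" and PP: "P\<^sup>T * P = 1\<^sub>m m" using P unfolding orth_mat_def by auto
  let ?E = "four_block_mat (1\<^sub>m 1) (0\<^sub>m 1 m) (0\<^sub>m m 1) P"
  show "?E \<in> carrier_mat (Suc m) (Suc m)" using Pc by auto
  have ET: "?E\<^sup>T = four_block_mat (1\<^sub>m 1) (0\<^sub>m 1 m) (0\<^sub>m m 1) P\<^sup>T"
    by (subst transpose_four_block_mat[OF one_carrier_mat zero_carrier_mat zero_carrier_mat Pc]) auto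
  have "?E\<^sup>T * ?E = four_block_mat (1\<^sub>m 1) (0\<^sub>m 1 m) (0\<^sub>m m 1) (P\<^sup>T * P)"
    unfolding ET by (subst mult_four_block_mat[OF one_carrier_mat zero_carrier_mat zero_carrier_mat
          transpose_carrier_mat[THEN iffD2, OF Pc] one_carrier_mat zero_carrier_mat zero_carrier_mat Pc])
      (use Pc in auto)
  also have "\<dots> = 1\<^sub>m (1 + m)" unfolding PP by (rule four_block_one_mat)
  finally show "?E\<^sup>T * ?E = 1\<^sub>m (Suc m)" by simp
qed

lemma orth_mat_of_orthonormal_cols:
  assumes ws: "set ws \<subseteq> carrier_vec n" "length ws = n"
    and on: "\<And>i j. i < n \<Longrightarrow> j < n \<Longrightarrow> ws ! i \<bullet> ws ! j = (if i = j then 1 else 0)"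
  shows "orth_mat n (mat_of_cols n ws)"
proof (rule orth_matI)
  let ?W = "mat_of_cols n ws"
  show W: "?W \<in> carrier_mat n n" using ws by auto
  have colW: "col ?W i = ws ! i" if "i < n" for i using that ws by (simp add: subsetD)
  show "?W\<^sup>T * ?W = 1\<^sub>m n"
  proof (rule eq_matI)
    fix i j assume "i < dim_row (1\<^sub>m n)" "j < dim_col (1\<^sub>m n)"
    hence ij: "i < n" "j < n" by auto
    have "(?W\<^sup>T * ?W) $$ (i,j) = col ?W i \<bullet> col ?W j" using ws ij by simp
    thus "(?W\<^sup>T * ?W) $$ (i,j) = 1\<^sub>m n $$ (i,j)" using ij by (simp add: colW on)
  qed (use W in auto)
qed

lemma orth_mat_of_orthogonal_cols:
  assumes ws: "set ws \<subseteq> carrier_vec n" "length ws = n"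
    and orth: "\<And>i j. i < n \<Longrightarrow> j < n \<Longrightarrow> (ws ! i \<bullet> ws ! j = 0) = (i \<noteq> j)"
  shows "orth_mat n (mat_of_cols n (map (\<lambda>w. (1 / sqrt (w \<bullet> w)) \<cdot>\<^sub>v w) ws))"
proof (rule orth_mat_of_orthonormal_cols)
  let ?ws' = "map (\<lambda>w. (1 / sqrt (w \<bullet> w)) \<cdot>\<^sub>v w) ws"
  have wsc: "ws ! i \<in> carrier_vec n" if "i < n" for i using ws that by auto
  have pos: "ws ! i \<bullet> ws ! i > 0" if "i < n" for i
    using conjugate_square_ge_0_vec[of "ws ! i"] orth[OF that that] by (simp add: sprodc_real)
  show "set ?ws' \<subseteq> carrier_vec n" "length ?ws' = n" using ws by auto
  fix i j assume ij: "i < n" "j < n"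
  have "?ws' ! i \<bullet> ?ws' ! j
      = (1 / sqrt (ws ! i \<bullet> ws ! i)) * (1 / sqrt (ws ! j \<bullet> ws ! j)) * (ws ! i \<bullet> ws ! j)"
    using ij ws wsc[OF ij(1)] wsc[OF ij(2)]
    by (simp add: smult_scalar_prod_distrib[OF wsc[OF ij(1)] wsc[OF ij(2)]] scalar_prod_smult_distrib[of _ n])
  also have "\<dots> = (if i = j then 1 else 0)"
    using orth[OF ij] pos[OF ij(1)] real_sqrt_mult_self[of "ws ! i \<bullet> ws ! i"]
    by (cases "i = j") (auto simp: field_simps)
  finally show "?ws' ! i \<bullet> ?ws' ! j = (if i = j then 1 else 0)" .
qed

text \<open>Every unit vector is the first column of an orthogonal matrix: complete it to a basis,
  apply Gram--Schmidt (which keeps the first vector) and normalise.\<close>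
lemma orthonormal_completion:
  fixes u :: "real vec"
  assumes u: "u \<in> carrier_vec n" and uu: "u \<bullet> u = 1"
  shows "\<exists>W. orth_mat n W \<and> col W 0 = u"
proof -
  interpret cof_vec_space n "TYPE(real)" .
  have n: "n \<noteq> 0" using u uu by (cases n) (auto simp: scalar_prod_def)
  have u0: "u \<noteq> 0\<^sub>v n" using uu by auto
  define b where "b = basis_completion u"
  define ws where "ws = gram_schmidt n b"
  from basis_completion[OF u u0, folded b_def]
  have dist_b: "distinct b" and indep: "\<not> lin_dep (set b)" and b: "set b \<subseteq> carrier_vec n"
    and hdb: "hd b = u" and len_b: "length b = n" by auto
  from hdb len_b n obtain vs where bv: "b = u # vs" by (cases b, auto)
  from gram_schmidt_result[OF b dist_b indep refl, folded ws_def]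
  have ws: "set ws \<subseteq> carrier_vec n" "corthogonal ws" "length ws = n" by (auto simp: len_b)
  from gram_schmidt_hd[OF u, of vs, folded bv] have hdws: "hd ws = u" unfolding ws_def .
  have "(ws ! i \<bullet> ws ! j = 0) = (i \<noteq> j)" if "i < n" "j < n" for i j
    using corthogonalD[OF ws(2)] that ws(3) by (simp add: sprodc_real)
  from orth_mat_of_orthogonal_cols[OF ws(1,3) this]
  have W: "orth_mat n (mat_of_cols n (map (\<lambda>w. (1 / sqrt (w \<bullet> w)) \<cdot>\<^sub>v w) ws))" .
  have "col (mat_of_cols n (map (\<lambda>w. (1 / sqrt (w \<bullet> w)) \<cdot>\<^sub>v w) ws)) 0 = u"
    using n ws hdws uu by (cases ws) auto
  thus ?thesis using W by blast
qed

lemma sym_first_col_block: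
  fixes B :: "real mat"
  assumes Bc: "B \<in> carrier_mat (Suc m) (Suc m)" and symB: "B\<^sup>T = B"
    and colB: "col B 0 = e \<cdot>\<^sub>v unit_vec (Suc m) 0"
  shows "\<exists>C. C \<in> carrier_mat m m \<and> C\<^sup>T = C \<and>
           B = four_block_mat (mat 1 1 (\<lambda>_. e)) (0\<^sub>m 1 m) (0\<^sub>m m 1) C"
proof -
  have Bi0: "B $$ (i, 0) = (if i = 0 then e else 0)" if "i < Suc m" for i
    using arg_cong[OF colB, of "\<lambda>v. v $ i"] Bc that by simp
  have B0j: "B $$ (0, j) = (if j = 0 then e else 0)" if "j < Suc m" for j
    using Bi0[OF that] arg_cong[OF symB, of "\<lambda>M. M $$ (j, 0)"] Bc that by simp
  define C where "C = mat m m (\<lambda>(i,j). B $$ (Suc i, Suc j))"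
  have Cc: "C \<in> carrier_mat m m" unfolding C_def by simp
  have symC: "C\<^sup>T = C"
  proof (rule eq_matI)
    fix i j assume "i < dim_row C" "j < dim_col C"
    thus "C\<^sup>T $$ (i, j) = C $$ (i, j)"
      unfolding C_def using arg_cong[OF symB, of "\<lambda>M. M $$ (Suc i, Suc j)"] Bc by auto
  qed (auto simp: C_def)
  have "B = four_block_mat (mat 1 1 (\<lambda>_. e)) (0\<^sub>m 1 m) (0\<^sub>m m 1) C"
  proof (rule eq_matI)
    fix i j assume "i < dim_row (four_block_mat (mat 1 1 (\<lambda>_. e)) (0\<^sub>m 1 m) (0\<^sub>m m 1) C)"
      "j < dim_col (four_block_mat (mat 1 1 (\<lambda>_. e)) (0\<^sub>m 1 m) (0\<^sub>m m 1) C)"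
    hence ij: "i < Suc m" "j < Suc m" using Cc by auto
    show "B $$ (i, j) = four_block_mat (mat 1 1 (\<lambda>_. e)) (0\<^sub>m 1 m) (0\<^sub>m m 1) C $$ (i, j)"
    proof (cases "i = 0 \<or> j = 0")
      case True thus ?thesis using Bi0 B0j ij Cc by auto
    next
      case False
      then obtain i' j' where "i = Suc i'" "j = Suc j'" by (cases i; cases j) auto
      thus ?thesis using ij Cc by (auto simp: C_def)
    qed
  qed (use Bc Cc in auto)
  thus ?thesis using Cc symC by blast
qed

lemma orth_deflation:
  fixes A W :: "real mat"
  assumes A: "A \<in> carrier_mat (Suc m) (Suc m)" and symA: "A\<^sup>T = A" and W: "orth_mat (Suc m) W"
    and eig: "A *\<^sub>v col W 0 = e \<cdot>\<^sub>v col W 0"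
  shows "\<exists>C. C \<in> carrier_mat m m \<and> C\<^sup>T = C \<and>
           W\<^sup>T * A * W = four_block_mat (mat 1 1 (\<lambda>_. e)) (0\<^sub>m 1 m) (0\<^sub>m m 1) C"
proof (rule sym_first_col_block)
  let ?n = "Suc m"
  have Wc: "W \<in> carrier_mat ?n ?n" and WW: "W\<^sup>T * W = 1\<^sub>m ?n" using W unfolding orth_mat_def by auto
  have WTc: "W\<^sup>T \<in> carrier_mat ?n ?n" using Wc by auto
  show "W\<^sup>T * A * W \<in> carrier_mat ?n ?n" using Wc A by auto
  have "(W\<^sup>T * A * W)\<^sup>T = (A * W)\<^sup>T * W\<^sup>T\<^sup>T" using Wc A
    by (simp add: assoc_mult_mat[OF WTc A Wc] transpose_mult[of _ ?n ?n _ ?n])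
  also have "\<dots> = W\<^sup>T * A * W" using Wc A symA by (simp add: transpose_mult[of _ ?n ?n _ ?n])
  finally show "(W\<^sup>T * A * W)\<^sup>T = W\<^sup>T * A * W" .
  have u: "col W 0 \<in> carrier_vec ?n" using Wc by (auto simp: col_def)
  have "col (W\<^sup>T * A * W) 0 = (W\<^sup>T * A) *\<^sub>v col W 0"
    by (rule col_mult2[of "W\<^sup>T * A" ?n ?n W ?n 0]) (use WTc A Wc in auto)
  also have "\<dots> = W\<^sup>T *\<^sub>v (A *\<^sub>v col W 0)"
    by (rule assoc_mult_mat_vec[OF WTc A u])
  also have "\<dots> = e \<cdot>\<^sub>v (W\<^sup>T *\<^sub>v col W 0)" unfolding eig by (rule mult_mat_vec[OF WTc u])
  also have "W\<^sup>T *\<^sub>v col W 0 = col (W\<^sup>T * W) 0"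
    by (rule col_mult2[of "W\<^sup>T" ?n ?n W ?n 0, symmetric]) (use Wc in auto)
  finally show "col (W\<^sup>T * A * W) 0 = e \<cdot>\<^sub>v unit_vec ?n 0" unfolding WW by simp
qed

lemma real_sym_unit_eigenvector:
  fixes A :: "real mat"
  assumes A: "A \<in> carrier_mat n n" and sym: "A\<^sup>T = A" and n: "n > 0"
  shows "\<exists>e u. u \<in> carrier_vec n \<and> u \<bullet> u = 1 \<and> A *\<^sub>v u = e \<cdot>\<^sub>v u"
proof -
  obtain e v where v: "v \<in> carrier_vec n" "v \<noteq> 0\<^sub>v n" "A *\<^sub>v v = e \<cdot>\<^sub>v v"
    using real_sym_eigenvector[OF A sym n] by auto
  have vv: "v \<bullet> v > 0" using conjugate_square_greater_0_vec[OF v(1)] v(2) by (simp add: sprodc_real)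
  define u where "u = (1 / sqrt (v \<bullet> v)) \<cdot>\<^sub>v v"
  have "u \<in> carrier_vec n" unfolding u_def using v by simp
  moreover have "u \<bullet> u = 1" unfolding u_def using v(1) vv
    by (simp add: smult_scalar_prod_distrib[OF v(1) v(1)] scalar_prod_smult_distrib[of _ n])
  moreover have "A *\<^sub>v u = e \<cdot>\<^sub>v u" unfolding u_def using v A
    by (auto simp: mult_mat_vec[OF A v(1)] smult_smult_assoc mult.commute)
  ultimately show ?thesis by blast
qed

lemma block_diag_conj:
  fixes Q F e1 :: "real mat"
  assumes Qc: "Q \<in> carrier_mat m m" and Fc: "F \<in> carrier_mat m m" and e1c: "e1 \<in> carrier_mat 1 1"
  shows "four_block_mat (1\<^sub>m 1) (0\<^sub>m 1 m) (0\<^sub>m m 1) Q * four_block_mat e1 (0\<^sub>m 1 m) (0\<^sub>m m 1) F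
           * (four_block_mat (1\<^sub>m 1) (0\<^sub>m 1 m) (0\<^sub>m m 1) Q)\<^sup>T
         = four_block_mat e1 (0\<^sub>m 1 m) (0\<^sub>m m 1) (Q * F * Q\<^sup>T)"
proof -
  have ET: "(four_block_mat (1\<^sub>m 1) (0\<^sub>m 1 m) (0\<^sub>m m 1) Q)\<^sup>T
      = four_block_mat (1\<^sub>m 1) (0\<^sub>m 1 m) (0\<^sub>m m 1) Q\<^sup>T"
    by (subst transpose_four_block_mat[OF one_carrier_mat zero_carrier_mat zero_carrier_mat Qc]) auto
  have ED: "four_block_mat (1\<^sub>m 1) (0\<^sub>m 1 m) (0\<^sub>m m 1) Q * four_block_mat e1 (0\<^sub>m 1 m) (0\<^sub>m m 1) F
      = four_block_mat e1 (0\<^sub>m 1 m) (0\<^sub>m m 1) (Q * F)"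
    by (subst mult_four_block_mat[OF one_carrier_mat zero_carrier_mat zero_carrier_mat Qc e1c
          zero_carrier_mat zero_carrier_mat Fc]) (use Qc Fc e1c in auto)
  show ?thesis unfolding ET ED
    by (subst mult_four_block_mat[OF e1c zero_carrier_mat zero_carrier_mat
          mult_carrier_mat[OF Qc Fc] one_carrier_mat zero_carrier_mat zero_carrier_mat
          transpose_carrier_mat[THEN iffD2, OF Qc]]) (use Qc Fc e1c in auto)
qed

text \<open>Spectral theorem for real symmetric matrices: orthogonal diagonalisation, by induction on
  the size, splitting off one unit eigenvector at a time.\<close>
theorem real_spectral:
  fixes A :: "real mat"
  assumes "A \<in> carrier_mat n n" "A\<^sup>T = A"
  shows "\<exists>P D. orth_mat n P \<and> D \<in> carrier_mat n n \<and> diagonal_mat D \<and> A = P * D * P\<^sup>T"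
  using assms
proof (induction n arbitrary: A)
  case 0
  have "A = 1\<^sub>m 0 * 0\<^sub>m 0 0 * (1\<^sub>m 0)\<^sup>T" using 0 by (intro eq_matI) auto
  moreover have "orth_mat 0 (1\<^sub>m 0)" "diagonal_mat (0\<^sub>m 0 0 :: real mat)"
    unfolding orth_mat_def diagonal_mat_def by auto
  moreover have "(0\<^sub>m 0 0 :: real mat) \<in> carrier_mat 0 0" by simp
  ultimately show ?case by blast
next
  case (Suc m A)
  let ?n = "Suc m"
  have A: "A \<in> carrier_mat ?n ?n" and symA: "A\<^sup>T = A" by fact+
  obtain e u where u: "u \<in> carrier_vec ?n" "u \<bullet> u = 1" and Au: "A *\<^sub>v u = e \<cdot>\<^sub>v u"
    using real_sym_unit_eigenvector[OF A symA] by auto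
  obtain W where W: "orth_mat ?n W" and W0: "col W 0 = u" using orthonormal_completion[OF u] by blast
  have Wc: "W \<in> carrier_mat ?n ?n" and WW: "W * W\<^sup>T = 1\<^sub>m ?n" using W unfolding orth_mat_def by auto
  obtain C where Cc: "C \<in> carrier_mat m m" and symC: "C\<^sup>T = C"
    and WAW: "W\<^sup>T * A * W = four_block_mat (mat 1 1 (\<lambda>_. e)) (0\<^sub>m 1 m) (0\<^sub>m m 1) C"
    using orth_deflation[OF A symA W] Au W0 by blast
  obtain Q F where Q: "orth_mat m Q" and Fc: "F \<in> carrier_mat m m" "diagonal_mat F"
    and CQ: "C = Q * F * Q\<^sup>T" using Suc.IH[OF Cc symC] by blast
  have Qc: "Q \<in> carrier_mat m m" using Q unfolding orth_mat_def by auto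
  define e1 where "e1 = (mat 1 1 (\<lambda>_. e) :: real mat)"
  have e1c: "e1 \<in> carrier_mat 1 1" unfolding e1_def by simp
  define E where "E = four_block_mat (1\<^sub>m 1) (0\<^sub>m 1 m) (0\<^sub>m m 1) Q"
  define D where "D = four_block_mat e1 (0\<^sub>m 1 m) (0\<^sub>m m 1) F"
  have E: "orth_mat ?n E" unfolding E_def by (rule orth_mat_block[OF Q])
  have Ec: "E \<in> carrier_mat ?n ?n" using E unfolding orth_mat_def by auto
  have Dc: "D \<in> carrier_mat ?n ?n" unfolding D_def using Fc e1c by auto
  have EDE: "E * D * E\<^sup>T = W\<^sup>T * A * W"
    unfolding WAW CQ E_def D_def e1_def[symmetric] by (rule block_diag_conj[OF Qc Fc(1) e1c])
  define P where "P = W * E"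
  have "P * D * P\<^sup>T = W * (E * D * E\<^sup>T) * W\<^sup>T" unfolding P_def using Wc Ec Dc
    by (simp add: transpose_mult[of _ ?n ?n _ ?n] assoc_mult_mat[of _ ?n ?n _ ?n _ ?n])
  also have "\<dots> = (W * W\<^sup>T) * A * (W * W\<^sup>T)" unfolding EDE using Wc A
    by (simp add: assoc_mult_mat[of _ ?n ?n _ ?n _ ?n])
  also have "\<dots> = A" unfolding WW using A by simp
  finally have "A = P * D * P\<^sup>T" ..
  moreover have "diagonal_mat D" unfolding D_def using Fc e1c unfolding diagonal_mat_def by auto
  moreover have "orth_mat ?n P" unfolding P_def by (rule orth_mat_mult[OF W E])
  ultimately show ?case using Dc by blast
qed

definition dmat :: "nat \<Rightarrow> (nat \<Rightarrow> real) \<Rightarrow> real mat" where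
  "dmat n d = mat n n (\<lambda>(i,j). if i = j then d i else 0)"

lemma dmat_carrier[simp]: "dmat n d \<in> carrier_mat n n"
  and dmat_dim[simp]: "dim_row (dmat n d) = n" "dim_col (dmat n d) = n"
  unfolding dmat_def by simp_all

lemma dmat_transpose[simp]: "(dmat n d)\<^sup>T = dmat n d"
  unfolding dmat_def by (rule eq_matI) auto

lemma dmat_mult_vec: "y \<in> carrier_vec n \<Longrightarrow> i < n \<Longrightarrow> (dmat n d *\<^sub>v y) $ i = d i * y $ i"
  unfolding dmat_def by (simp add: scalar_prod_def if_distrib[of "\<lambda>x. x * _"] sum.delta cong: if_cong)

lemma dmat_mult_dmat: "dmat n f * dmat n g = dmat n (\<lambda>i. f i * g i)"
  unfolding dmat_def
  by (rule eq_matI) (auto simp: scalar_prod_def if_distrib[of "\<lambda>x. x * _"] sum.delta cong: if_cong)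

lemma dmat_one: "(\<And>i. i < n \<Longrightarrow> d i = 1) \<Longrightarrow> dmat n d = 1\<^sub>m n"
  unfolding dmat_def by (rule eq_matI) auto

lemma det_dmat: "det (dmat n d) = (\<Prod>i<n. d i)"
proof -
  have "det (dmat n d) = prod_list (diag_mat (dmat n d))"
    by (rule det_upper_triangular[OF _ dmat_carrier]) (auto simp: upper_triangular_def dmat_def)
  also have "\<dots> = (\<Prod>i<n. d i)"
    using prod_list_diag_prod[of "dmat n d"] by (simp add: dmat_def atLeast0LessThan)
  finally show ?thesis .
qed

lemma conj_dmat_entries:
  assumes Pc: "P \<in> carrier_mat n n"
  shows "P * dmat n d * P\<^sup>T = mat n n (\<lambda>(r,c). \<Sum>i<n. P $$ (r,i) * d i * P $$ (c,i))"
proof (rule eq_matI)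
  fix r c assume "r < dim_row (mat n n (\<lambda>(r,c). \<Sum>i<n. P $$ (r,i) * d i * P $$ (c,i)))"
    "c < dim_col (mat n n (\<lambda>(r,c). \<Sum>i<n. P $$ (r,i) * d i * P $$ (c,i)))"
  hence r: "r < n" and c: "c < n" by auto
  have PD: "(P * dmat n d) $$ (r,i) = P $$ (r,i) * d i" if "i < n" for i
    using Pc r that unfolding dmat_def
    by (simp add: scalar_prod_def if_distrib[of "\<lambda>x. _ * x"] sum.delta cong: if_cong)
  have "(P * dmat n d * P\<^sup>T) $$ (r,c) = (\<Sum>i\<in>{0..<n}. (P * dmat n d) $$ (r,i) * P $$ (c,i))"
    using Pc r c by (auto simp: scalar_prod_def intro!: sum.cong)
  also have "\<dots> = (\<Sum>i<n. P $$ (r,i) * d i * P $$ (c,i))"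
    by (simp add: PD lessThan_atLeast0)
  finally show "(P * dmat n d * P\<^sup>T) $$ (r,c) = mat n n (\<lambda>(r,c). \<Sum>i<n. P $$ (r,i) * d i * P $$ (c,i)) $$ (r,c)"
    using r c by simp
qed (use Pc in auto)

lemma rank_sum_outer:
  fixes f g :: "nat \<Rightarrow> nat \<Rightarrow> real"
  assumes "finite S"
  shows "vec_space.rank n (mat n n (\<lambda>(r,c). \<Sum>i\<in>S. f i r * g i c)) \<le> card S"
  using assms
proof (induction S rule: finite_induct)
  case empty
  interpret vec_space "TYPE(real)" n .
  have "rank (0\<^sub>m n n :: real mat) = 0" by (rule rank_0I)
  thus ?case unfolding zero_mat_def by simp
next
  case (insert x S)
  interpret vec_space "TYPE(real)" n .
  let ?R = "mat n n (\<lambda>(r,c). f x r * g x c)" and ?M = "mat n n (\<lambda>(r,c). \<Sum>i\<in>S. f i r * g i c)"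
  have "mat n n (\<lambda>(r,c). \<Sum>i\<in>insert x S. f i r * g i c) = ?R + ?M"
    using insert by (intro eq_matI) auto
  moreover have "rank ?R \<le> 1"
    by (rule rank_le_1_product_entries[where f="f x" and g="g x"]) auto
  moreover have "rank (?R + ?M) \<le> rank ?R + rank ?M" by (rule rank_subadditive) auto
  ultimately show ?case using insert by simp
qed

lemma exists_orth_vec:
  fixes ws :: "real vec list"
  assumes ws: "set ws \<subseteq> carrier_vec k" and len: "length ws < k"
  shows "\<exists>y. y \<in> carrier_vec k \<and> y \<noteq> 0\<^sub>v k \<and> (\<forall>w\<in>set ws. w \<bullet> y = 0)"
proof -
  define c where "c i = (if i < length ws then ws ! i else 0\<^sub>v k)" for i
  have cc: "c i \<in> carrier_vec k" for i unfolding c_def using ws by auto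
  have "det (mat\<^sub>r k k (\<lambda>i. if i = k - 1 then 0\<^sub>v k else c i)) = 0"
    by (rule det_row_0) (use len cc in auto)
  moreover have "(\<lambda>i. if i = k - 1 then 0\<^sub>v k else c i) = c"
    using len unfolding c_def by (intro ext) auto
  ultimately have "det (mat\<^sub>r k k c) = 0" by simp
  then obtain v where v: "v \<in> carrier_vec k" "v \<noteq> 0\<^sub>v k" "mat\<^sub>r k k c *\<^sub>v v = 0\<^sub>v k"
    using det_0_iff_vec_prod_zero_field[of "mat\<^sub>r k k c" k] by auto
  have "w \<bullet> v = 0" if "w \<in> set ws" for w
  proof -
    obtain i where i: "i < length ws" "w = ws ! i" using \<open>w \<in> set ws\<close> by (auto simp: in_set_conv_nth)
    have "(mat\<^sub>r k k c *\<^sub>v v) $ i = c i \<bullet> v" using i len cc by (simp add: row_mat_of_row_fun)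
    thus ?thesis using v(3) i len unfolding c_def by auto
  qed
  thus ?thesis using v by blast
qed

lemma length_filter_nth: "length (filter P xs) = length (filter (\<lambda>i. P (xs ! i)) [0..<length xs])"
proof -
  have "xs = map (\<lambda>i. xs ! i) [0..<length xs]" by (simp add: map_nth)
  hence "filter P xs = filter P (map (\<lambda>i. xs ! i) [0..<length xs])" by simp
  thus ?thesis by (simp add: filter_map comp_def)
qed

lemma card_indices_filter: "card {i. i < length xs \<and> P (xs ! i)} = length (filter P xs)"
proof -
  have "{i. i < length xs \<and> P (xs ! i)} = set (filter (\<lambda>i. P (xs ! i)) [0..<length xs])" by auto
  thus ?thesis using distinct_card[of "filter (\<lambda>i. P (xs ! i)) [0..<length xs]"]
    by (simp add: length_filter_nth[of P xs])
qed

lemma poly_linfac_zero: "poly (\<Prod>a\<leftarrow>es. [:- a, 1:]) c = 0 \<longleftrightarrow> (c::'a::idom) \<in> set es"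
proof (induction es)
  case (Cons a es)
  have "poly (\<Prod>a\<leftarrow>a # es. [:- a, 1:]) c = (c - a) * poly (\<Prod>a\<leftarrow>es. [:- a, 1:]) c"
    by (simp del: mult_pCons_left add: algebra_simps)
  thus ?case using Cons by auto
qed simp

lemma linfac_nonzero: "(\<Prod>a\<leftarrow>es. [:- a, 1:]) \<noteq> (0 :: 'a :: idom poly)"
  by (auto simp: prod_list_zero_iff)

lemma order_linfac: "Polynomial.order c (\<Prod>a\<leftarrow>(es :: 'a :: idom list). [:- a, 1:]) = count_list es c"
proof (induction es)
  case Nil thus ?case by (simp add: order_0I)
next
  case (Cons a es)
  have "Polynomial.order c (\<Prod>a\<leftarrow>a # es. [:- a, 1:]) =
    Polynomial.order c [:- a, 1:] + Polynomial.order c (\<Prod>a\<leftarrow>es. [:- a, 1:])"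
    using linfac_nonzero[of "a # es"] by (simp add: order_mult del: mult_pCons_left)
  thus ?case using Cons by (simp add: order_linear')
qed

lemma count_list_filter: "P x \<Longrightarrow> count_list (filter P es) x = count_list es x"
  by (induction es) auto

lemma sum_count_filter: "(\<Sum>c\<in>{c. P c \<and> c \<in> set es}. count_list es c) = length (filter P es)"
proof -
  have S: "{c. P c \<and> c \<in> set es} = set (filter P es)" by auto
  have "(\<Sum>c\<in>{c. P c \<and> c \<in> set es}. count_list es c) = (\<Sum>c\<in>set (filter P es). count_list (filter P es) c)"
    unfolding S by (intro sum.cong refl) (simp add: count_list_filter)
  also have "\<dots> = length (filter P es)" by (rule sum_count_set) auto
  finally show ?thesis .
qed

text \<open>Inside this context
  the eigenvalues of A (with multiplicity) are the diagonal entries of D, and all inertia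
  statements about A are derived from the diagonal form of its quadratic form.\<close>
locale orth_diag =
  fixes n :: nat and A P D :: "real mat"
  assumes P: "orth_mat n P" and Dc: "D \<in> carrier_mat n n" and Ddiag: "diagonal_mat D"
    and Aeq: "A = P * D * P\<^sup>T"
begin

lemma Pc: "P \<in> carrier_mat n n" and PP: "P\<^sup>T * P = 1\<^sub>m n"
  using P unfolding orth_mat_def by auto

lemma Ac: "A \<in> carrier_mat n n" unfolding Aeq using Pc Dc by auto

definition eigs :: "real list" where "eigs = diag_mat D"

lemma len_eigs: "length eigs = n" unfolding eigs_def diag_mat_def using Dc by simp

lemma eigs_nth: "i < n \<Longrightarrow> eigs ! i = D $$ (i,i)"
  unfolding eigs_def diag_mat_def using Dc by simp

lemma D_eq: "D = dmat n (\<lambda>i. eigs ! i)"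
  by (rule eq_matI) (use Dc Ddiag in \<open>auto simp: eigs_nth diagonal_mat_def dmat_def\<close>)

lemma A_eq_dmat: "A = P * dmat n (\<lambda>i. eigs ! i) * P\<^sup>T"
  unfolding Aeq by (rule arg_cong[where f="\<lambda>M. P * M * P\<^sup>T", OF D_eq])

lemma D_mult_vec:
  assumes "y \<in> carrier_vec n" "i < n"
  shows "(D *\<^sub>v y) $ i = eigs ! i * y $ i"
proof -
  have "(D *\<^sub>v y) $ i = (dmat n (\<lambda>i. eigs ! i) *\<^sub>v y) $ i"
    by (rule arg_cong[where f="\<lambda>M. (M *\<^sub>v y) $ i", OF D_eq])
  thus ?thesis using assms by (simp del: index_mult_mat_vec add: dmat_mult_vec)
qed

text \<open>A is similar to D, so its characteristic polynomial splits with roots eigs; this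
  identifies the eigenvalue counts of the definitions with counts in eigs.\<close>
lemma char_poly_eq: "char_poly A = (\<Prod>a\<leftarrow>eigs. [:- a, 1:])"
proof -
  have "similar_mat_wit A D P P\<^sup>T" unfolding similar_mat_wit_def Let_def
    using Ac Pc Dc P Aeq unfolding orth_mat_def by auto
  hence "char_poly A = char_poly D" by (intro char_poly_similar) (auto simp: similar_mat_def)
  also have "\<dots> = (\<Prod>a\<leftarrow>eigs. [:- a, 1:])" unfolding eigs_def
    by (rule char_poly_upper_triangular[OF Dc])
      (use Ddiag Dc in \<open>auto simp: diagonal_mat_def upper_triangular_def\<close>)
  finally show ?thesis .
qed

lemma eigenvalue_iff: "eigenvalue A c \<longleftrightarrow> c \<in> set eigs"
  using eigenvalue_root_char_poly[OF Ac] unfolding char_poly_eq poly_linfac_zero .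

lemma num_pos_eig_eq: "num_pos_eig A = length (filter (\<lambda>e. e > 0) eigs)"
  unfolding num_pos_eig_def eigenvalue_iff char_poly_eq order_linfac by (rule sum_count_filter)

lemma num_neg_eig_eq: "num_neg_eig A = length (filter (\<lambda>e. e < 0) eigs)"
  unfolding num_neg_eig_def eigenvalue_iff char_poly_eq order_linfac by (rule sum_count_filter)

lemma quad_form:
  assumes x: "x \<in> carrier_vec n"
  shows "x \<bullet> (A *\<^sub>v x) = (\<Sum>i<n. eigs ! i * ((P\<^sup>T *\<^sub>v x) $ i)^2)"
proof -
  define y where "y = P\<^sup>T *\<^sub>v x"
  have y: "y \<in> carrier_vec n" unfolding y_def using Pc x by auto
  have "A *\<^sub>v x = P *\<^sub>v (D *\<^sub>v y)" unfolding Aeq y_def using Pc Dc x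
    by (simp add: assoc_mult_mat_vec[of _ n n _ n])
  moreover have "y \<bullet> (D *\<^sub>v y) = x \<bullet> (P *\<^sub>v (D *\<^sub>v y))"
    using transpose_vec_mult_scalar[OF Pc _ x, of "D *\<^sub>v y"] Dc y unfolding y_def by auto
  ultimately have "x \<bullet> (A *\<^sub>v x) = y \<bullet> (D *\<^sub>v y)" by simp
  also have "\<dots> = (\<Sum>i<n. y $ i * (eigs ! i * y $ i))"
    unfolding scalar_prod_def lessThan_atLeast0 using y Dc
    by (intro sum.cong) (auto simp del: index_mult_mat_vec simp add: D_mult_vec)
  finally show ?thesis unfolding y_def by (simp add: power2_eq_square mult_ac)
qed

lemma num_pos_le:
  assumes W: "set W \<subseteq> carrier_vec n"
    and H: "\<And>x. x \<in> carrier_vec n \<Longrightarrow> (\<forall>w\<in>set W. w \<bullet> x = 0) \<Longrightarrow> x \<bullet> (A *\<^sub>v x) \<le> 0"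
  shows "length (filter (\<lambda>e. e > 0) eigs) \<le> length W"
proof (rule ccontr)
  assume "\<not> ?thesis"
  hence lt: "length W < length (filter (\<lambda>e. e > 0) eigs)" by simp
  \<comment> \<open>A nonzero y vanishing off the positive eigen-coordinates and orthogonal to P^T W.\<close>
  define J where "J = filter (\<lambda>i. \<not> eigs ! i > 0) [0..<n]"
  have lenJ: "length J + length (filter (\<lambda>e. e > 0) eigs) = n"
    unfolding J_def length_filter_nth[of _ eigs] len_eigs
    using sum_length_filter_compl[of "\<lambda>i. eigs ! i > 0" "[0..<n]"] by simp
  define ws where "ws = map (\<lambda>w. P\<^sup>T *\<^sub>v w) W @ map (unit_vec n) J"
  have wsc: "set ws \<subseteq> carrier_vec n" unfolding ws_def using W Pc by auto
  have "length ws < n" unfolding ws_def using lt lenJ by simp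
  from exists_orth_vec[OF wsc this] obtain y where
    y: "y \<in> carrier_vec n" "y \<noteq> 0\<^sub>v n" and orth: "\<forall>w\<in>set ws. w \<bullet> y = 0" by blast
  define x where "x = P *\<^sub>v y"
  have x: "x \<in> carrier_vec n" unfolding x_def using Pc y by auto
  have Px: "P\<^sup>T *\<^sub>v x = y" unfolding x_def using Pc y
    by (simp add: assoc_mult_mat_vec[symmetric, of _ n n _ n] PP)
  have "\<forall>w\<in>set W. w \<bullet> x = 0"
  proof
    fix w assume w: "w \<in> set W"
    have "w \<bullet> x = (P\<^sup>T *\<^sub>v w) \<bullet> y" unfolding x_def
      using transpose_vec_mult_scalar[OF Pc y(1), of w] W w by auto
    thus "w \<bullet> x = 0" using orth w unfolding ws_def by auto
  qed
  from H[OF x this] have le: "x \<bullet> (A *\<^sub>v x) \<le> 0" .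
  have yJ: "y $ i = 0" if "i < n" "\<not> eigs ! i > 0" for i
  proof -
    have "unit_vec n i \<in> set ws" unfolding ws_def J_def using that by auto
    hence "unit_vec n i \<bullet> y = 0" using orth by auto
    thus ?thesis using that y by simp
  qed
  from y obtain i where i: "i < n" "y $ i \<noteq> 0" by (metis carrier_vecD eq_vecI index_zero_vec)
  hence "eigs ! i > 0" using yJ by force
  have nonneg: "\<forall>j\<in>{..<n}. 0 \<le> eigs ! j * (y $ j)^2"
  proof
    fix j assume "j \<in> {..<n}"
    thus "0 \<le> eigs ! j * (y $ j)^2" using yJ[of j] by (cases "eigs ! j > 0") auto
  qed
  have "0 < eigs ! i * (y $ i)^2" using \<open>eigs ! i > 0\<close> i by simp
  also have "\<dots> \<le> (\<Sum>j<n. eigs ! j * (y $ j)^2)"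
    by (rule member_le_sum) (use i nonneg in auto)
  also have "\<dots> = x \<bullet> (A *\<^sub>v x)" using quad_form[OF x] Px by simp
  finally show False using le by simp
qed

lemma num_pos_ge:
  assumes U: "set U \<subseteq> carrier_vec n"
    and H: "\<And>c. c \<in> carrier_vec (length U) \<Longrightarrow> c \<noteq> 0\<^sub>v (length U) \<Longrightarrow>
       (mat_of_cols n U *\<^sub>v c) \<bullet> (A *\<^sub>v (mat_of_cols n U *\<^sub>v c)) > 0"
  shows "length U \<le> length (filter (\<lambda>e. e > 0) eigs)"
proof (rule ccontr)
  assume "\<not> ?thesis"
  hence lt: "length (filter (\<lambda>e. e > 0) eigs) < length U" by simp
  define k where "k = length U"
  define M where "M = mat_of_cols n U"
  have Mc: "M \<in> carrier_mat n k" unfolding M_def k_def by simp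
  \<comment> \<open>A nonzero c such that M c has no component along the positive eigen-coordinates.\<close>
  define I where "I = filter (\<lambda>i. eigs ! i > 0) [0..<n]"
  have lenI: "length I = length (filter (\<lambda>e. e > 0) eigs)"
    unfolding I_def length_filter_nth[of _ eigs] len_eigs ..
  define ws where "ws = map (\<lambda>i. row (P\<^sup>T * M) i) I"
  have wsc: "set ws \<subseteq> carrier_vec k" unfolding ws_def I_def using Pc Mc by (auto simp: row_def)
  have "length ws < k" unfolding ws_def k_def using lt lenI by simp
  from exists_orth_vec[OF wsc this] obtain c where
    c: "c \<in> carrier_vec k" "c \<noteq> 0\<^sub>v k" and orth: "\<forall>w\<in>set ws. w \<bullet> c = 0" by blast
  define x where "x = M *\<^sub>v c"
  have x: "x \<in> carrier_vec n" unfolding x_def using Mc c by auto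
  have pos: "x \<bullet> (A *\<^sub>v x) > 0" using H[of c] c unfolding x_def M_def k_def by auto
  define y where "y = P\<^sup>T *\<^sub>v x"
  have yi: "y $ i = row (P\<^sup>T * M) i \<bullet> c" if "i < n" for i
  proof -
    have "y = (P\<^sup>T * M) *\<^sub>v c" unfolding y_def x_def using Pc Mc c
      by (simp add: assoc_mult_mat_vec[of _ n n _ k])
    thus ?thesis using that Pc Mc by simp
  qed
  have yI: "y $ i = 0" if "i < n" "eigs ! i > 0" for i
  proof -
    have "row (P\<^sup>T * M) i \<in> set ws" unfolding ws_def I_def using that by auto
    thus ?thesis using orth yi[OF that(1)] by auto
  qed
  have "x \<bullet> (A *\<^sub>v x) = (\<Sum>j<n. eigs ! j * (y $ j)^2)" using quad_form[OF x] unfolding y_def .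
  also have "\<dots> \<le> 0"
  proof (rule sum_nonpos)
    fix j assume "j \<in> {..<n}"
    thus "eigs ! j * (y $ j)^2 \<le> 0"
      using yI[of j] by (cases "eigs ! j > 0") (auto simp: mult_nonpos_nonneg)
  qed
  finally show False using pos by simp
qed

text \<open>Upper bound: A is a sum of that many
  rank-one matrices; lower bound: adding the rank-one matrices of the zero eigenvalues (with
  weight one) gives an invertible matrix.\<close>
lemma rank_eq_num_nonzero: "vec_space.rank n A = length (filter (\<lambda>e. e \<noteq> 0) eigs)"
proof -
  interpret vec_space "TYPE(real)" n .
  define Snz where "Snz = {i. i < n \<and> eigs ! i \<noteq> 0}"
  define Sz where "Sz = {i. i < n \<and> eigs ! i = 0}"
  have card_Snz: "card Snz = length (filter (\<lambda>e. e \<noteq> 0) eigs)"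
    unfolding Snz_def using card_indices_filter[of eigs] len_eigs by simp
  have split: "{..<n} = Snz \<union> Sz" "Snz \<inter> Sz = {}" unfolding Snz_def Sz_def by auto
  hence card_split: "card Sz + card Snz = n" by (metis card_Un_disjoint card_lessThan finite_Un finite_lessThan add.commute)
  have sum_split: "(\<Sum>i<n. f i) = (\<Sum>i\<in>Snz. f i) + (\<Sum>i\<in>Sz. f i)" for f :: "nat \<Rightarrow> real"
    unfolding split(1) by (rule sum.union_disjoint) (use split in \<open>auto simp: Snz_def Sz_def\<close>)
  have A_entries: "A = mat n n (\<lambda>(r,c). \<Sum>i\<in>Snz. P $$ (r,i) * (eigs ! i * P $$ (c,i)))"
  proof -
    have "(\<Sum>i\<in>Sz. P $$ (r,i) * eigs ! i * P $$ (c,i)) = 0" for r c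
      by (rule sum.neutral) (simp add: Sz_def)
    thus ?thesis unfolding A_eq_dmat conj_dmat_entries[OF Pc] sum_split
      by (simp add: mult.assoc)
  qed
  have le: "rank A \<le> card Snz" unfolding A_entries
    by (rule rank_sum_outer) (auto simp: Snz_def)
  define N where "N = mat n n (\<lambda>(r,c). \<Sum>i\<in>Sz. P $$ (r,i) * P $$ (c,i))"
  have Nc: "N \<in> carrier_mat n n" unfolding N_def by simp
  have rN: "rank N \<le> card Sz" unfolding N_def
    using rank_sum_outer[of Sz n "\<lambda>i r. P $$ (r,i)" "\<lambda>i c. P $$ (c,i)"] by (auto simp: Sz_def)
  define d where "d i = (if eigs ! i \<noteq> 0 then eigs ! i else 1)" for i
  have "(\<Sum>i\<in>Snz. P $$ (r,i) * d i * P $$ (c,i)) = (\<Sum>i\<in>Snz. P $$ (r,i) * (eigs ! i * P $$ (c,i)))"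
    and "(\<Sum>i\<in>Sz. P $$ (r,i) * d i * P $$ (c,i)) = (\<Sum>i\<in>Sz. P $$ (r,i) * P $$ (c,i))" for r c
    by (auto simp: d_def Snz_def Sz_def intro!: sum.cong)
  hence AN: "A + N = P * dmat n d * P\<^sup>T"
    unfolding conj_dmat_entries[OF Pc] sum_split A_entries N_def
    by (intro eq_matI) auto
  have "det (A + N) = det P * det P\<^sup>T * (\<Prod>i<n. d i)"
    unfolding AN using Pc by (simp add: det_mult[of _ n] det_dmat)
  also have "det P * det P\<^sup>T = 1"
    using det_mult[OF transpose_carrier_mat[THEN iffD2, OF Pc] Pc] PP det_transpose[OF Pc] by simp
  finally have "det (A + N) \<noteq> 0" by (simp add: d_def)
  hence "rank (A + N) = n" using det_rank_iff[of "A + N"] Ac Nc by auto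
  moreover have "rank (A + N) \<le> rank A + rank N" by (rule rank_subadditive[OF Ac Nc])
  ultimately show ?thesis using le rN card_split card_Snz by linarith
qed

end

lemma orth_diag_uminus: "orth_diag n A P D \<Longrightarrow> orth_diag n (-A) P (-D)"
  unfolding orth_diag_def
  by (auto simp: diagonal_mat_def mult_smult_distrib[symmetric] orth_mat_def)

lemma orth_diag_exists: "A \<in> carrier_mat n n \<Longrightarrow> A\<^sup>T = A \<Longrightarrow> \<exists>P D. orth_diag n A P D"
  using real_spectral unfolding orth_diag_def by blast

lemma orth_to_columns_zero:
  fixes U :: "real vec list"
  assumes U: "set U \<subseteq> carrier_vec n" and c: "c \<in> carrier_vec (length U)"
    and orth: "\<forall>k<length U. U ! k \<bullet> (mat_of_cols n U *\<^sub>v c) = 0"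
  shows "mat_of_cols n U *\<^sub>v c = 0\<^sub>v n"
proof -
  define M where "M = mat_of_cols n U"
  define x where "x = M *\<^sub>v c"
  have Mc: "M \<in> carrier_mat n (length U)" unfolding M_def by simp
  have x: "x \<in> carrier_vec n" unfolding x_def using Mc c by simp
  have "M\<^sup>T *\<^sub>v x = 0\<^sub>v (length U)"
  proof (rule eq_vecI)
    fix k assume "k < dim_vec (0\<^sub>v (length U) :: real vec)"
    hence k: "k < length U" by simp
    hence "U ! k \<in> carrier_vec n" using U nth_mem[of k U] by auto
    hence "(M\<^sup>T *\<^sub>v x) $ k = U ! k \<bullet> x" using k unfolding M_def transpose_mat_of_cols by simp
    thus "(M\<^sup>T *\<^sub>v x) $ k = 0\<^sub>v (length U) $ k" using orth k unfolding x_def M_def by simp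
  qed (use Mc in simp)
  hence "x \<bullet> x = 0" using transpose_vec_mult_scalar[OF Mc c x] c unfolding x_def by simp
  thus ?thesis using conjugate_square_eq_0_vec[OF x] unfolding x_def M_def by (simp add: sprodc_real)
qed

lemma sq_mult_carrier: "A \<in> carrier_mat n n \<Longrightarrow> B \<in> carrier_mat n n \<Longrightarrow> A * B \<in> carrier_mat n n"
  by simp

context orth_diag
begin

lemma eigs_pos_if_num_pos_full:
  assumes "num_pos_eig A = n"
  shows "\<forall>e\<in>set eigs. e > 0"
proof
  fix e assume e: "e \<in> set eigs"
  show "e > 0"
  proof (rule ccontr)
    assume "\<not> e > 0"
    hence "length (filter (\<lambda>e. e > 0) eigs) < length eigs" by (rule length_filter_less[OF e])
    thus False using assms num_pos_eig_eq len_eigs by simp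
  qed
qed

text \<open>A positive definite A is congruent to the identity: X^T A X = 1 for X = P D^{-1/2}.\<close>
lemma pos_def_congruent_one:
  assumes pos: "\<forall>e\<in>set eigs. e > 0"
  shows "\<exists>X. X \<in> carrier_mat n n \<and> X\<^sup>T * A * X = 1\<^sub>m n"
proof -
  define R where "R = dmat n (\<lambda>i. 1 / sqrt (eigs ! i))"
  define X where "X = P * R"
  have Rc: "R \<in> carrier_mat n n" unfolding R_def by simp
  have Xc: "X \<in> carrier_mat n n" unfolding X_def using Pc Rc by simp
  have "X\<^sup>T * A * X = R * (P\<^sup>T * P) * dmat n (\<lambda>i. eigs ! i) * (P\<^sup>T * P) * R"
    unfolding X_def A_eq_dmat using Pc Rc
    by (simp add: transpose_mult[of _ n n _ n] R_def sq_mult_carrier assoc_mult_mat[of _ n n _ n _ n])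
  also have "\<dots> = dmat n (\<lambda>i. 1 / sqrt (eigs ! i) * eigs ! i * (1 / sqrt (eigs ! i)))"
    unfolding PP R_def by (simp add: dmat_mult_dmat)
  also have "\<dots> = 1\<^sub>m n"
  proof (rule dmat_one)
    fix i assume "i < n"
    hence "eigs ! i > 0" using pos len_eigs nth_mem by metis
    thus "1 / sqrt (eigs ! i) * eigs ! i * (1 / sqrt (eigs ! i)) = 1"
      by (simp add: field_simps)
  qed
  finally show ?thesis using Xc by blast
qed

end

lemma simultaneous_diag:
  assumes H: "orth_diag n H P D" and pos: "\<forall>e\<in>set (orth_diag.eigs D). e > 0"
    and Kc: "K \<in> carrier_mat n n" and symK: "K\<^sup>T = K"
  shows "\<exists>X E. X \<in> carrier_mat n n \<and> X\<^sup>T * H * X = 1\<^sub>m n \<and>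
           E \<in> carrier_mat n n \<and> diagonal_mat E \<and> X\<^sup>T * K * X = E"
proof -
  interpret H: orth_diag n H P D by fact
  obtain X0 where X0c: "X0 \<in> carrier_mat n n" and X0: "X0\<^sup>T * H * X0 = 1\<^sub>m n"
    using H.pos_def_congruent_one[OF pos] by blast
  define S where "S = X0\<^sup>T * K * X0"
  have Sc: "S \<in> carrier_mat n n" unfolding S_def using X0c Kc by simp
  have "S\<^sup>T = S" unfolding S_def using X0c Kc symK
    by (simp add: transpose_mult[of _ n n _ n] sq_mult_carrier assoc_mult_mat[of _ n n _ n _ n])
  then obtain Q E where "orth_diag n S Q E" using orth_diag_exists[OF Sc] by blast
  then interpret S: orth_diag n S Q E .
  define X where "X = X0 * Q"
  have Xc: "X \<in> carrier_mat n n" unfolding X_def using X0c S.Pc by simp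
  have XT: "X\<^sup>T = Q\<^sup>T * X0\<^sup>T" unfolding X_def using X0c S.Pc by (simp add: transpose_mult)
  have "X\<^sup>T * H * X = Q\<^sup>T * (X0\<^sup>T * H * X0) * Q"
    unfolding XT unfolding X_def using X0c S.Pc H.Ac
    by (simp add: sq_mult_carrier assoc_mult_mat[of _ n n _ n _ n])
  also have "\<dots> = 1\<^sub>m n" unfolding X0 using S.Pc S.PP by simp
  finally have XHX: "X\<^sup>T * H * X = 1\<^sub>m n" .
  have "X\<^sup>T * K * X = Q\<^sup>T * (X0\<^sup>T * K * X0) * Q"
    unfolding XT unfolding X_def using X0c S.Pc Kc
    by (simp add: sq_mult_carrier assoc_mult_mat[of _ n n _ n _ n])
  also have "\<dots> = (Q\<^sup>T * Q) * E * (Q\<^sup>T * Q)"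
    unfolding S_def[symmetric] S.Aeq using S.Pc S.Dc
    by (simp add: sq_mult_carrier assoc_mult_mat[of _ n n _ n _ n])
  also have "\<dots> = E" unfolding S.PP using S.Dc by simp
  finally show ?thesis using Xc XHX S.Dc S.Ddiag by blast
qed

lemma pencil_factorisation:
  fixes H K X E :: "real mat"
  assumes Hc: "H \<in> carrier_mat n n" and symH: "H\<^sup>T = H" and Kc: "K \<in> carrier_mat n n"
    and Xc: "X \<in> carrier_mat n n" and XHX: "X\<^sup>T * H * X = 1\<^sub>m n" and XKX: "X\<^sup>T * K * X = E"
  shows "(H * X) * (H * X)\<^sup>T = H" and "K * X = (H * X) * E"
proof -
  have XTHc: "X\<^sup>T * H \<in> carrier_mat n n" using Xc Hc by simp
  have "X * (X\<^sup>T * H) = 1\<^sub>m n" by (rule mat_mult_left_right_inverse[OF XTHc Xc XHX])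
  hence "(X * (X\<^sup>T * H))\<^sup>T = 1\<^sub>m n" by simp
  hence HXX: "H * (X * X\<^sup>T) = 1\<^sub>m n" using Xc Hc symH
    by (simp add: transpose_mult[of _ n n _ n] sq_mult_carrier assoc_mult_mat[of _ n n _ n _ n])
  have "(H * X) * (H * X)\<^sup>T = (H * (X * X\<^sup>T)) * H" using Hc Xc symH
    by (simp add: transpose_mult[of _ n n _ n] sq_mult_carrier assoc_mult_mat[of _ n n _ n _ n])
  thus "(H * X) * (H * X)\<^sup>T = H" unfolding HXX using Hc by simp
  have "K * X = (H * (X * X\<^sup>T)) * (K * X)" unfolding HXX using Kc Xc by simp
  also have "\<dots> = (H * X) * (X\<^sup>T * K * X)" using Hc Xc Kc
    by (simp add: sq_mult_carrier assoc_mult_mat[of _ n n _ n _ n])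
  finally show "K * X = (H * X) * E" unfolding XKX .
qed

text \<open>The (binomially normalised) coefficients of sum_t lambda_t (alpha_t x + beta_t y)^N.\<close>
definition coefs :: "nat \<Rightarrow> (real \<times> real \<times> real) list \<Rightarrow> nat \<Rightarrow> real" where
  "coefs N R j = (\<Sum>t\<leftarrow>R. fst t * fst (snd t) ^ (N - j) * snd (snd t) ^ j)"

lemma coefs_Nil[simp]: "coefs N [] j = 0"
  unfolding coefs_def by simp

lemma coefs_Cons[simp]:
  "coefs N (t # R) j = fst t * fst (snd t) ^ (N - j) * snd (snd t) ^ j + coefs N R j"
  unfolding coefs_def by simp

lemma binom_expand: "((al::real) * x + be * y) ^ N =
  (\<Sum>j=0..N. real (N choose j) * al ^ (N - j) * be ^ j * x ^ (N - j) * y ^ j)"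
proof -
  have "(al * x + be * y) ^ N = (be * y + al * x) ^ N" by (simp add: add.commute)
  also have "\<dots> = (\<Sum>k\<le>N. real (N choose k) * (be * y) ^ k * (al * x) ^ (N - k))"
    by (rule binomial_ring)
  also have "\<dots> = (\<Sum>j=0..N. real (N choose j) * al ^ (N - j) * be ^ j * x ^ (N - j) * y ^ j)"
    by (simp add: atLeast0AtMost power_mult_distrib mult_ac)
  finally show ?thesis .
qed

lemma sum_powers_expand: "(\<Sum>t\<leftarrow>R. fst t * (fst (snd t) * x + snd (snd t) * y) ^ N) =
  (\<Sum>j=0..N. real (N choose j) * coefs N R j * x ^ (N - j) * y ^ j)"
proof (induction R)
  case Nil thus ?case by simp
next
  case (Cons t R)
  have "(\<Sum>t\<leftarrow>t # R. fst t * (fst (snd t) * x + snd (snd t) * y) ^ N)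
      = fst t * (\<Sum>j=0..N. real (N choose j) * fst (snd t) ^ (N - j) * snd (snd t) ^ j * x ^ (N - j) * y ^ j)
        + (\<Sum>j=0..N. real (N choose j) * coefs N R j * x ^ (N - j) * y ^ j)"
    unfolding list.map sum_list.Cons by (subst Cons.IH, subst binom_expand, rule refl)
  also have "\<dots> = (\<Sum>j=0..N. fst t * (real (N choose j) * fst (snd t) ^ (N - j) * snd (snd t) ^ j * x ^ (N - j) * y ^ j)
      + real (N choose j) * coefs N R j * x ^ (N - j) * y ^ j)"
    by (simp only: sum_distrib_left sum.distrib)
  also have "\<dots> = (\<Sum>j=0..N. real (N choose j) * coefs N (t # R) j * x ^ (N - j) * y ^ j)"
    by (intro sum.cong refl) (simp only: coefs_Cons distrib_left distrib_right mult_ac)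
  finally show ?case .
qed

text \<open>A list of terms represents the form with coefficients a iff it has the right
  coefficients a_0, ..., a_{2s}: two binary forms agree iff their coefficients agree.\<close>
lemma is_repr_iff:
  "is_repr s a R \<longleftrightarrow> (\<forall>t\<in>set R. fst t \<noteq> 0) \<and> (\<forall>j\<le>2*s. a j = coefs (2*s) R j)"
proof
  assume r: "is_repr s a R"
  hence "form_eval s a 1 y = (\<Sum>j=0..2*s. real ((2*s) choose j) * coefs (2*s) R j * 1 ^ (2*s - j) * y ^ j)"
    for y unfolding is_repr_def sum_powers_expand by auto
  hence "\<forall>y. (\<Sum>j\<le>2*s. (real ((2*s) choose j) * a j) * y ^ j)
           = (\<Sum>j\<le>2*s. (real ((2*s) choose j) * coefs (2*s) R j) * y ^ j)"
    unfolding form_eval_def by (simp add: atLeast0AtMost mult_ac)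
  hence "\<forall>j\<le>2*s. real ((2*s) choose j) * a j = real ((2*s) choose j) * coefs (2*s) R j"
    by (subst (asm) polyfun_eq_coeffs)
  thus "(\<forall>t\<in>set R. fst t \<noteq> 0) \<and> (\<forall>j\<le>2*s. a j = coefs (2*s) R j)"
    using r unfolding is_repr_def by auto
next
  assume h: "(\<forall>t\<in>set R. fst t \<noteq> 0) \<and> (\<forall>j\<le>2*s. a j = coefs (2*s) R j)"
  have "form_eval s a x y = (\<Sum>j=0..2*s. real ((2*s) choose j) * coefs (2*s) R j * x ^ (2*s - j) * y ^ j)"
    for x y unfolding form_eval_def using h by (intro sum.cong) auto
  thus "is_repr s a R" using h unfolding is_repr_def sum_powers_expand by auto
qed

lemma in_Q_repr: "in_Q s a \<Longrightarrow> \<exists>L. is_repr s a (map (\<lambda>l. (1, l)) L)"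
  unfolding in_Q_def is_repr_def by (auto simp: comp_def)

definition mvec :: "nat \<Rightarrow> real \<Rightarrow> real \<Rightarrow> real vec" where
  "mvec s al be = vec (s+1) (\<lambda>i. al ^ (s - i) * be ^ i)"

lemma mvec_carrier[simp]: "mvec s al be \<in> carrier_vec (s+1)" "mvec s al be \<in> carrier_vec (Suc s)"
  unfolding mvec_def by simp_all

lemma mvec_scalar_prod:
  "x \<in> carrier_vec (s+1) \<Longrightarrow> mvec s al be \<bullet> x = (\<Sum>i<s+1. al ^ (s - i) * be ^ i * x $ i)"
  unfolding mvec_def scalar_prod_def by (simp add: atLeast0LessThan del: sum.lessThan_Suc)

lemma hankel_carrier[simp]:
  "hankel s a \<in> carrier_mat (s+1) (s+1)" "hankel s a \<in> carrier_mat (Suc s) (Suc s)"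
  and hankel_dim[simp]: "dim_row (hankel s a) = s+1" "dim_col (hankel s a) = s+1"
  unfolding hankel_def by simp_all

lemma hankel_sym: "(hankel s a)\<^sup>T = hankel s a"
  unfolding hankel_def by (rule eq_matI) (auto simp: add.commute)

text \<open>For a representation, each Hankel entry a_{i+j} is sum_t lambda_t m_t(i) m_t(j),
  i.e. the catalecticant is sum_t lambda_t m_t m_t^T with m_t the moment vectors.\<close>
lemma hankel_entry_repr:
  assumes a: "\<forall>j\<le>2*s. a j = coefs (2*s) R j" and ij: "i \<le> s" "j \<le> s"
  shows "a (i + j) = (\<Sum>k<length R. fst (R ! k) *
           (fst (snd (R ! k)) ^ (s - i) * snd (snd (R ! k)) ^ i) *
           (fst (snd (R ! k)) ^ (s - j) * snd (snd (R ! k)) ^ j))"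
proof -
  have "2*s - (i+j) = (s - i) + (s - j)" using ij by simp
  hence "a (i + j) = (\<Sum>k<length R. fst (R ! k) * fst (snd (R ! k)) ^ ((s - i) + (s - j)) *
           snd (snd (R ! k)) ^ (i + j))"
    using a ij unfolding coefs_def sum_list_sum_nth by (simp add: atLeast0LessThan)
  thus ?thesis by (simp add: power_add mult_ac)
qed

lemma hankel_quad_form:
  assumes a: "\<forall>j\<le>2*s. a j = coefs (2*s) R j" and x: "x \<in> carrier_vec (s+1)"
  shows "x \<bullet> (hankel s a *\<^sub>v x) = (\<Sum>t\<leftarrow>R. fst t * (mvec s (fst (snd t)) (snd (snd t)) \<bullet> x)^2)"
proof -
  let ?l = "\<lambda>k. fst (R ! k)" and ?m = "\<lambda>k i. fst (snd (R ! k)) ^ (s - i) * snd (snd (R ! k)) ^ i"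
  have "x \<bullet> (hankel s a *\<^sub>v x) = (\<Sum>i<s+1. \<Sum>j<s+1. x $ i * (a (i + j) * x $ j))"
    using x unfolding hankel_def
    by (simp add: scalar_prod_def atLeast0LessThan sum_distrib_left del: sum.lessThan_Suc)
  also have "\<dots> = (\<Sum>i<s+1. \<Sum>j<s+1. \<Sum>k<length R. ?l k * ((?m k i * x $ i) * (?m k j * x $ j)))"
    by (intro sum.cong refl)
      (simp add: hankel_entry_repr[OF a] sum_distrib_left sum_distrib_right mult_ac del: sum.lessThan_Suc)
  also have "\<dots> = (\<Sum>k<length R. \<Sum>i<s+1. \<Sum>j<s+1. ?l k * ((?m k i * x $ i) * (?m k j * x $ j)))"
    by (subst sum.swap, rule sum.cong[OF refl], rule sum.swap)
  also have "\<dots> = (\<Sum>k<length R. ?l k * ((\<Sum>i<s+1. ?m k i * x $ i) * (\<Sum>j<s+1. ?m k j * x $ j)))"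
    unfolding sum_product unfolding sum_distrib_left ..
  also have "\<dots> = (\<Sum>t\<leftarrow>R. fst t * (mvec s (fst (snd t)) (snd (snd t)) \<bullet> x)^2)"
    unfolding sum_list_sum_nth mvec_scalar_prod[OF x]
    by (simp add: atLeast0LessThan power2_eq_square del: sum.lessThan_Suc)
  finally show ?thesis .
qed

lemma hankel_orth_diag: "\<exists>P D. orth_diag (s+1) (hankel s a) P D"
  by (rule orth_diag_exists[OF hankel_carrier(1) hankel_sym])

text \<open>Part (1), positive half: the catalecticant has at most as many positive eigenvalues
  as a representation has positive terms, because its quadratic form
  sum_t lambda_t (m_t . x)^2 is nonpositive on the orthogonal complement of the
  moment vectors m_t of the positive terms.\<close>
lemma num_pos_eig_le_badge:
  assumes r: "is_repr s a R"
  shows "num_pos_eig (hankel s a) \<le> fst (badge R)"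
proof -
  obtain P D where "orth_diag (s+1) (hankel s a) P D" using hankel_orth_diag by blast
  then interpret H: orth_diag "s+1" "hankel s a" P D .
  have a: "\<forall>j\<le>2*s. a j = coefs (2*s) R j" using r is_repr_iff by blast
  define W where "W = map (\<lambda>t. mvec s (fst (snd t)) (snd (snd t))) (filter (\<lambda>t. fst t > 0) R)"
  have "length (filter (\<lambda>e. e > 0) H.eigs) \<le> length W"
  proof (rule H.num_pos_le)
    show "set W \<subseteq> carrier_vec (s+1)" unfolding W_def by auto
    fix x assume x: "x \<in> carrier_vec (s+1)" and orth: "\<forall>w\<in>set W. w \<bullet> x = 0"
    have "fst t * (mvec s (fst (snd t)) (snd (snd t)) \<bullet> x)^2 \<le> 0" if "t \<in> set R" for t
    proof (cases "fst t > 0")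
      case True
      hence "mvec s (fst (snd t)) (snd (snd t)) \<in> set W" unfolding W_def using that by auto
      thus ?thesis using orth by auto
    qed (simp add: mult_nonpos_nonneg)
    thus "x \<bullet> (hankel s a *\<^sub>v x) \<le> 0"
      unfolding hankel_quad_form[OF a x] by (intro sum_list_nonpos) auto
  qed
  thus ?thesis using H.num_pos_eig_eq unfolding W_def badge_def by simp
qed

lemma hankel_uminus: "hankel s (\<lambda>j. - a j) = - hankel s a"
  unfolding hankel_def by (rule eq_matI) auto

lemma num_neg_eig_hankel: "num_neg_eig (hankel s a) = num_pos_eig (hankel s (\<lambda>j. - a j))"
proof -
  obtain P D where H: "orth_diag (s+1) (hankel s a) P D" using hankel_orth_diag by blast
  interpret H: orth_diag "s+1" "hankel s a" P D by fact
  interpret G: orth_diag "s+1" "hankel s (\<lambda>j. - a j)" P "-D"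
    unfolding hankel_uminus by (rule orth_diag_uminus[OF H])
  have "G.eigs = map uminus H.eigs" unfolding G.eigs_def H.eigs_def diag_mat_def using H.Dc by auto
  thus ?thesis using H.num_neg_eig_eq G.num_pos_eig_eq by (simp add: filter_map comp_def)
qed

lemma coefs_uminus: "coefs N (map (\<lambda>t. (- fst t, snd t)) R) j = - coefs N R j"
  by (induction R) auto

text \<open>Part (1), negative half: apply the positive half to -p.\<close>
lemma num_neg_eig_le_badge:
  assumes r: "is_repr s a R"
  shows "num_neg_eig (hankel s a) \<le> snd (badge R)"
proof -
  have "is_repr s (\<lambda>j. - a j) (map (\<lambda>t. (- fst t, snd t)) R)"
    using r unfolding is_repr_iff by (auto simp: coefs_uminus)
  from num_pos_eig_le_badge[OF this] show ?thesis
    unfolding num_neg_eig_hankel badge_def by (simp add: filter_map comp_def)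
qed

lemma sig_H_le_badges:
  assumes "u \<in> badges s a"
  shows "badge_le (sig_H s a) u"
  using assms num_pos_eig_le_badge num_neg_eig_le_badge
  unfolding badges_def badge_le_def sig_H_def by auto

lemma proportional_iff: "proportional (a, b) (c, d) \<longleftrightarrow> a * d = b * c"
proof
  assume "proportional (a, b) (c, d)"
  thus "a * d = b * c" unfolding proportional_def by auto
next
  assume h: "a * d = b * c"
  show "proportional (a, b) (c, d)"
  proof (cases "c = 0 \<and> d = 0")
    case True thus ?thesis unfolding proportional_def by auto
  next
    case False
    show ?thesis
    proof (cases "c = 0")
      case True
      with False have d: "d \<noteq> 0" by simp
      with h True have a0: "a = 0" by simp
      show ?thesis unfolding proportional_def
        by (rule disjI1, rule exI[of _ "b / d"]) (use True d a0 in simp)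
    next
      case c: False
      have "b = (a / c) * d" using h c by (simp add: field_simps)
      show ?thesis unfolding proportional_def
        by (rule disjI1, rule exI[of _ "a / c"]) (use c \<open>b = (a / c) * d\<close> in simp)
    qed
  qed
qed

lemma proportional_sym: "proportional l m = proportional m l"
  unfolding proportional_def by auto

lemma honest_map_snd: "map snd R = map snd R' \<Longrightarrow> honest R = honest R'"
  unfolding honest_def by (metis length_map nth_map)

lemma honest_Cons: "honest (t # R) \<longleftrightarrow> honest R \<and> (\<forall>u\<in>set R. \<not> proportional (snd t) (snd u))"
proof
  assume h: "honest (t # R)"
  have "honest R" unfolding honest_def
  proof (intro allI impI)
    fix i j assume "i < length R" "j < length R" "i \<noteq> j"
    thus "\<not> proportional (snd (R ! i)) (snd (R ! j))"
      using h[unfolded honest_def, rule_format, of "Suc i" "Suc j"] by simp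
  qed
  moreover have "\<forall>u\<in>set R. \<not> proportional (snd t) (snd u)"
  proof
    fix u assume "u \<in> set R"
    then obtain j where "j < length R" "u = R ! j" by (auto simp: in_set_conv_nth)
    thus "\<not> proportional (snd t) (snd u)"
      using h[unfolded honest_def, rule_format, of 0 "Suc j"] by simp
  qed
  ultimately show "honest R \<and> (\<forall>u\<in>set R. \<not> proportional (snd t) (snd u))" by blast
next
  assume h: "honest R \<and> (\<forall>u\<in>set R. \<not> proportional (snd t) (snd u))"
  show "honest (t # R)" unfolding honest_def
  proof (intro allI impI)
    fix i j assume ij: "i < length (t # R)" "j < length (t # R)" "i \<noteq> j"
    show "\<not> proportional (snd ((t # R) ! i)) (snd ((t # R) ! j))"
    proof (cases i)
      case 0
      then obtain j' where "j = Suc j'" using ij by (cases j) auto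
      thus ?thesis using 0 h ij by auto
    next
      case (Suc i')
      show ?thesis
      proof (cases j)
        case 0 thus ?thesis using Suc h ij by (auto simp: proportional_sym)
      next
        case (Suc j') thus ?thesis using \<open>i = Suc i'\<close> h ij unfolding honest_def by auto
      qed
    qed
  qed
qed

lemma coefs_update: "i < length R \<Longrightarrow> coefs N (R[i := x]) j =
  coefs N R j - fst (R ! i) * fst (snd (R ! i)) ^ (N - j) * snd (snd (R ! i)) ^ j
  + fst x * fst (snd x) ^ (N - j) * snd (snd x) ^ j"
proof (induction R arbitrary: i)
  case Nil thus ?case by simp
next
  case (Cons t R)
  thus ?case by (cases i) auto
qed

definition pos_honest :: "(real \<times> real \<times> real) list \<Rightarrow> bool" where
  "pos_honest R \<longleftrightarrow> honest R \<and> (\<forall>t\<in>set R. fst t > 0 \<and> (fst (snd t) \<noteq> 0 \<or> snd (snd t) \<noteq> 0))"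

lemma badge_pos_honest: "pos_honest R \<Longrightarrow> badge R = (length R, 0)"
  unfolding pos_honest_def badge_def by (auto simp: filter_id_conv filter_empty_conv)

text \<open>Adding a positive term w (xi x + eta y)^{2s} to an honest positive representation:
  if the new linear form is proportional to an existing one, c times it, the term is absorbed
  into that one (its coefficient grows by w c^{2s}); otherwise it is simply prepended.\<close>
lemma pos_honest_add_term:
  assumes R: "pos_honest R" and w: "w > 0" and nz: "xi \<noteq> 0 \<or> eta \<noteq> 0"
  shows "\<exists>R'. pos_honest R' \<and> length R' \<le> Suc (length R) \<and>
           (\<forall>j\<le>2*s. coefs (2*s) R' j = coefs (2*s) ((w, xi, eta) # R) j)"
proof (cases "\<exists>i<length R. proportional (xi, eta) (snd (R ! i))")
  case True
  then obtain i where i: "i < length R" and pr: "proportional (xi, eta) (snd (R ! i))" by blast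
  obtain l al be where Ri: "R ! i = (l, al, be)" by (cases "R ! i") auto
  have "R ! i \<in> set R" using i by simp
  hence lpos: "l > 0" and nz2: "al \<noteq> 0 \<or> be \<noteq> 0" using R Ri unfolding pos_honest_def by auto
  from pr Ri have det: "xi * be = eta * al" by (simp add: proportional_iff)
  obtain c where c: "xi = c * al" "eta = c * be"
  proof (cases "al = 0")
    case True
    with nz2 det have "be \<noteq> 0" "xi = 0" by auto
    thus ?thesis using that[of "eta / be"] True by simp
  next
    case False
    hence "eta = (xi / al) * be" using det by (simp add: field_simps)
    thus ?thesis using that[of "xi / al"] False by simp
  qed
  define R' where "R' = R[i := (l + w * c ^ (2*s), al, be)]"
  have "map snd R' = map snd R" unfolding R'_def map_update using i Ri
    by (metis list_update_id nth_map snd_conv)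
  hence "honest R'" using R honest_map_snd unfolding pos_honest_def by blast
  moreover have "l + w * c ^ (2*s) > 0" using lpos w by (simp add: add_pos_nonneg zero_le_even_power)
  ultimately have "pos_honest R'" using R nz2 set_update_subset_insert[of R i]
    unfolding pos_honest_def R'_def by fastforce
  moreover have "coefs (2*s) R' j = coefs (2*s) ((w, xi, eta) # R) j" if "j \<le> 2*s" for j
  proof -
    have "c ^ (2*s) = c ^ (2*s - j) * c ^ j" using that by (simp add: power_add[symmetric])
    hence "w * c ^ (2*s) * al ^ (2*s - j) * be ^ j = w * xi ^ (2*s - j) * eta ^ j"
      unfolding c power_mult_distrib by (simp only: mult_ac)
    thus ?thesis unfolding R'_def coefs_update[OF i] Ri by (simp add: algebra_simps)
  qed
  moreover have "length R' \<le> Suc (length R)" unfolding R'_def by simp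
  ultimately show ?thesis by blast
next
  case False
  have "honest ((w, xi, eta) # R)" unfolding honest_Cons
    using R False unfolding pos_honest_def by (metis in_set_conv_nth snd_conv)
  hence "pos_honest ((w, xi, eta) # R)" using R w nz unfolding pos_honest_def by auto
  thus ?thesis by fastforce
qed

text \<open>Any representation with nonnegative coefficients can be turned into an honest one with
  positive coefficients and at most as many terms (terms with zero coefficient or zero linear
  form vanish because 2s > 0; proportional terms are merged).\<close>
lemma pos_honest_of_nonneg:
  assumes "\<forall>t\<in>set T. fst t \<ge> 0" and s: "s \<ge> 1"
  shows "\<exists>R. pos_honest R \<and> length R \<le> length T \<and> (\<forall>j\<le>2*s. coefs (2*s) R j = coefs (2*s) T j)"
  using assms(1)
proof (induction T)
  case Nil
  have "pos_honest []" unfolding pos_honest_def honest_def by simp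
  thus ?case by auto
next
  case (Cons t T)
  from Cons obtain R where R: "pos_honest R" "length R \<le> length T"
    "\<forall>j\<le>2*s. coefs (2*s) R j = coefs (2*s) T j" by auto
  obtain w xi eta where t: "t = (w, xi, eta)" by (cases t) auto
  have w: "w \<ge> 0" using Cons.prems t by auto
  show ?case
  proof (cases "w = 0 \<or> (xi = 0 \<and> eta = 0)")
    case True
    have "w * xi ^ (2*s - j) * eta ^ j = 0" if "j \<le> 2*s" for j
      using True s by (cases j) auto
    hence "\<forall>j\<le>2*s. coefs (2*s) R j = coefs (2*s) (t # T) j" using R(3) t by simp
    thus ?thesis using R(1,2) by auto
  next
    case False
    hence "w > 0" "xi \<noteq> 0 \<or> eta \<noteq> 0" using w by auto
    from pos_honest_add_term[OF R(1) this] obtain R' where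
      "pos_honest R'" "length R' \<le> Suc (length R)"
      "\<forall>j\<le>2*s. coefs (2*s) R' j = coefs (2*s) ((w, xi, eta) # R) j" by blast
    thus ?thesis using R(2,3) t by auto
  qed
qed

lemma moment_elimination:
  fixes al be c :: "nat \<Rightarrow> real"
  assumes eq: "\<forall>i\<le>Suc s. (\<Sum>k<Suc m. c k * (al k ^ (Suc s - i) * be k ^ i)) = 0"
  shows "\<forall>i\<le>s. (\<Sum>k<m. c k * (be m * al k - al m * be k) * (al k ^ (s - i) * be k ^ i)) = 0"
proof (intro allI impI)
  fix i assume i: "i \<le> s"
  have E: "(\<Sum>k<m. c k * (al k ^ (Suc s - i) * be k ^ i)) = - (c m * (al m ^ (Suc s - i) * be m ^ i))"
    if "i \<le> Suc s" for i
    using eq[rule_format, OF that] by simp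
  have si: "Suc s - i = Suc (s - i)" "Suc s - Suc i = s - i" using i by auto
  have "(\<Sum>k<m. c k * (be m * al k - al m * be k) * (al k ^ (s - i) * be k ^ i))
      = be m * (\<Sum>k<m. c k * (al k ^ (Suc s - i) * be k ^ i))
        - al m * (\<Sum>k<m. c k * (al k ^ (Suc s - Suc i) * be k ^ Suc i))"
    unfolding si by (simp add: sum_distrib_left sum_subtractf[symmetric] algebra_simps)
  also have "\<dots> = be m * (- (c m * (al m ^ (Suc s - i) * be m ^ i)))
      - al m * (- (c m * (al m ^ (Suc s - Suc i) * be m ^ Suc i)))"
    using E[of i] E[of "Suc i"] i by simp
  also have "\<dots> = 0" unfolding si by (simp add: algebra_simps)
  finally show "(\<Sum>k<m. c k * (be m * al k - al m * be k) * (al k ^ (s - i) * be k ^ i)) = 0" .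
qed

text \<open>Induction on m via the elimination step:
  it kills all coefficients but the last, and a single nonzero moment vector is nonzero.\<close>
lemma moment_vectors_independent:
  fixes al be c :: "nat \<Rightarrow> real"
  assumes "m \<le> s + 1"
    and np: "\<forall>j<m. \<forall>k<m. j \<noteq> k \<longrightarrow> al j * be k \<noteq> be j * al k"
    and nz: "\<forall>k<m. al k \<noteq> 0 \<or> be k \<noteq> 0"
    and eq: "\<forall>i\<le>s. (\<Sum>k<m. c k * (al k ^ (s - i) * be k ^ i)) = 0"
  shows "\<forall>k<m. c k = 0"
  using assms
proof (induction m arbitrary: s c)
  case 0 thus ?case by simp
next
  case (Suc m s c)
  note prems = Suc.prems
  show ?case
  proof (cases s)
    case 0
    with prems(1) have "m = 0" by simp
    thus ?thesis using prems(4) 0 by auto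
  next
    case (Suc s')
    have "\<forall>k<m. c k * (be m * al k - al m * be k) = 0"
      by (rule Suc.IH[of s']) (use prems Suc moment_elimination[where s=s' and m=m and c=c and al=al and be=be] in auto)
    hence ck: "c k = 0" if "k < m" for k
      using prems(2) that by (auto simp: algebra_simps)
    have cm: "c m * (al m ^ (s - i) * be m ^ i) = 0" if "i \<le> s" for i
      using prems(4)[rule_format, OF that] ck by simp
    show ?thesis
    proof (cases "c m = 0")
      case True thus ?thesis using ck by (auto simp: less_Suc_eq)
    next
      case False
      from cm[of 0] False have "al m = 0" by simp
      moreover from cm[of s] False have "be m = 0" using Suc by auto
      ultimately show ?thesis using prems(3) by auto
    qed
  qed
qed

lemma hankel_form_nonpos_orth:
  assumes a: "\<forall>j\<le>2*s. a j = coefs (2*s) R j" and pos: "\<forall>t\<in>set R. fst t > 0"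
    and x: "x \<in> carrier_vec (s+1)" and le: "x \<bullet> (hankel s a *\<^sub>v x) \<le> 0"
  shows "\<forall>t\<in>set R. mvec s (fst (snd t)) (snd (snd t)) \<bullet> x = 0"
proof -
  let ?xs = "map (\<lambda>t. fst t * (mvec s (fst (snd t)) (snd (snd t)) \<bullet> x)^2) R"
  have nonneg: "\<forall>y\<in>set ?xs. y \<ge> 0" using pos by auto
  hence "sum_list ?xs = 0" using le sum_list_nonneg[of ?xs] unfolding hankel_quad_form[OF a x] by force
  hence "\<forall>y\<in>set ?xs. y = 0" using sum_list_nonneg_eq_0_iff[of ?xs] nonneg by blast
  thus ?thesis using pos by fastforce
qed

text \<open>Lower inertia bound: the moment vectors of m <= s+1 pairwise non-proportional terms of a
  representation with positive coefficients span an m-dimensional subspace on which the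
  catalecticant form is positive definite, so the catalecticant has at least m positive
  eigenvalues.\<close>
lemma num_pos_eig_ge:
  assumes r: "is_repr s a R" and pos: "\<forall>t\<in>set R. fst t > 0"
    and m: "m \<le> length R" "m \<le> s + 1"
    and np: "\<forall>j<m. \<forall>k<m. j \<noteq> k \<longrightarrow> \<not> proportional (snd (R ! j)) (snd (R ! k))"
    and nz: "\<forall>k<m. fst (snd (R ! k)) \<noteq> 0 \<or> snd (snd (R ! k)) \<noteq> 0"
  shows "m \<le> num_pos_eig (hankel s a)"
proof -
  obtain P D where "orth_diag (s+1) (hankel s a) P D" using hankel_orth_diag by blast
  then interpret H: orth_diag "s+1" "hankel s a" P D .
  have a: "\<forall>j\<le>2*s. a j = coefs (2*s) R j" using r is_repr_iff by blast
  define al where "al k = fst (snd (R ! k))" for k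
  define be where "be k = snd (snd (R ! k))" for k
  define U where "U = map (\<lambda>k. mvec s (al k) (be k)) [0..<m]"
  have U: "set U \<subseteq> carrier_vec (s+1)" "length U = m" unfolding U_def by auto
  have "length U \<le> length (filter (\<lambda>e. e > 0) H.eigs)"
  proof (rule H.num_pos_ge[OF U(1)])
    fix c assume c: "(c :: real vec) \<in> carrier_vec (length U)" "c \<noteq> 0\<^sub>v (length U)"
    define x where "x = mat_of_cols (s+1) U *\<^sub>v c"
    have x: "x \<in> carrier_vec (s+1)"
      unfolding x_def by (rule mult_mat_vec_carrier[OF mat_of_cols_carrier(1) c(1)])
    have xi: "x $ i = (\<Sum>k<m. c $ k * (al k ^ (s - i) * be k ^ i))" if "i < s+1" for i
      unfolding x_def using that c U
      by (simp add: mat_of_cols_def scalar_prod_def U_def mvec_def atLeast0LessThan mult.commute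
          del: sum.lessThan_Suc)
    show "x \<bullet> (hankel s a *\<^sub>v x) > 0"
    proof (rule ccontr)
      assume "\<not> x \<bullet> (hankel s a *\<^sub>v x) > 0"
      hence "\<forall>t\<in>set R. mvec s (fst (snd t)) (snd (snd t)) \<bullet> x = 0"
        by (intro hankel_form_nonpos_orth[OF a pos x]) simp
      hence "\<forall>k<length U. U ! k \<bullet> x = 0" using m U unfolding U_def al_def be_def by auto
      hence x0: "x = 0\<^sub>v (s+1)" unfolding x_def by (rule orth_to_columns_zero[OF U(1) c(1)])
      have "\<forall>k<m. c $ k = 0"
      proof (rule moment_vectors_independent[of m s al be "\<lambda>k. c $ k"])
        show "m \<le> s + 1" by fact
        show "\<forall>j<m. \<forall>k<m. j \<noteq> k \<longrightarrow> al j * be k \<noteq> be j * al k"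
          using np unfolding al_def be_def by (metis proportional_iff prod.collapse)
        show "\<forall>k<m. al k \<noteq> 0 \<or> be k \<noteq> 0" using nz unfolding al_def be_def by auto
        show "\<forall>i\<le>s. (\<Sum>k<m. c $ k * (al k ^ (s - i) * be k ^ i)) = 0"
          using xi x0 by (metis Suc_eq_plus1 index_zero_vec(1) le_imp_less_Suc)
      qed
      hence "c = 0\<^sub>v (length U)" using c(1) U by (intro eq_vecI) auto
      thus False using c(2) by simp
    qed
  qed
  thus ?thesis using H.num_pos_eig_eq U by simp
qed

text \<open>For an honest positive representation with at most s+1 terms, the bounds of part (1)
  and of the previous lemma meet: its length is the number of positive eigenvalues.\<close>
lemma num_pos_eig_short_rep:
  assumes r: "is_repr s a R" and R: "pos_honest R" and len: "length R \<le> s + 1"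
  shows "num_pos_eig (hankel s a) = length R"
proof -
  have "num_pos_eig (hankel s a) \<le> length R"
    using num_pos_eig_le_badge[OF r] badge_pos_honest[OF R] by simp
  moreover have "length R \<le> num_pos_eig (hankel s a)"
    by (rule num_pos_eig_ge[OF r _ order.refl len])
      (use R in \<open>auto simp: pos_honest_def honest_def\<close>)
  ultimately show ?thesis by simp
qed

text \<open>The catalecticant with all indices shifted by one; its last entry is irrelevant.\<close>
definition shifted_hankel :: "nat \<Rightarrow> (nat \<Rightarrow> real) \<Rightarrow> real mat" where
  "shifted_hankel s a = mat (s+1) (s+1) (\<lambda>(i,j). if i + j < 2*s then a (i+j+1) else 0)"

lemma shifted_hankel_rows:
  "r < s \<Longrightarrow> c \<le> s \<Longrightarrow> shifted_hankel s a $$ (r, c) = hankel s a $$ (Suc r, c)"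
  unfolding shifted_hankel_def hankel_def by simp

text \<open>The rows of Y = H X, where the columns of X are generalised eigenvectors of the pencil
  (H, shifted H) with eigenvalues e_i, form geometric progressions: Y_{r,i} = e_i^r Y_{0,i}.
  Row r+1 of H is row r of the shifted catalecticant, so Y_{r+1,i} = (K X)_{r,i} = e_i Y_{r,i}.\<close>
lemma hankel_pencil_rows:
  fixes X Y E :: "real mat"
  assumes Xc: "X \<in> carrier_mat (s+1) (s+1)" and Ec: "E \<in> carrier_mat (s+1) (s+1)"
    and Ediag: "diagonal_mat E" and Y: "Y = hankel s a * X"
    and KX: "shifted_hankel s a * X = Y * E"
    and ri: "r \<le> s" "i < s+1"
  shows "Y $$ (r, i) = (E $$ (i,i)) ^ r * Y $$ (0, i)"
  using ri
proof (induction r)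
  case (Suc r)
  let ?K = "shifted_hankel s a"
  have Kc: "?K \<in> carrier_mat (s+1) (s+1)" unfolding shifted_hankel_def by simp
  have Yc: "Y \<in> carrier_mat (s+1) (s+1)" unfolding Y by (rule mult_carrier_mat[OF hankel_carrier(1) Xc])
  have r: "r < s" and i: "i < s+1" using Suc by simp_all
  have "(?K * X) $$ (r, i) = (\<Sum>c\<in>{0..<s+1}. ?K $$ (r,c) * X $$ (c,i))"
    using r i Kc Xc by (simp add: scalar_prod_def)
  also have "\<dots> = (\<Sum>c\<in>{0..<s+1}. hankel s a $$ (Suc r, c) * X $$ (c,i))"
    by (intro sum.cong refl) (use r in \<open>simp add: shifted_hankel_rows\<close>)
  also have "\<dots> = Y $$ (Suc r, i)"
    using r i Xc unfolding Y by (simp add: scalar_prod_def)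
  finally have "Y $$ (Suc r, i) = (Y * E) $$ (r, i)" unfolding KX ..
  also have "\<dots> = (\<Sum>k\<in>{0..<s+1}. Y $$ (r,k) * E $$ (k,i))"
    using r i Yc Ec by (simp add: scalar_prod_def)
  also have "\<dots> = (\<Sum>k\<in>{i}. Y $$ (r,k) * E $$ (k,i))"
    by (rule sum.mono_neutral_right) (use i Ediag Ec in \<open>auto simp: diagonal_mat_def\<close>)
  finally show ?case using Suc.IH Suc.prems by simp
qed simp

text \<open>If H_p = Y Y^T and the rows of Y are geometric progressions Y_{r,i} = e_i^r Y_{0,i},
  then a_l = sum_i Y_{0,i}^2 e_i^l, i.e. p = sum_i Y_{0,i}^2 (x + e_i y)^{2s}.\<close>
lemma hankel_moments:
  fixes Y :: "real mat" and e :: "nat \<Rightarrow> real"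
  assumes Yc: "Y \<in> carrier_mat (s+1) (s+1)" and YY: "Y * Y\<^sup>T = hankel s a"
    and Y_pow: "\<And>r i. r \<le> s \<Longrightarrow> i < s+1 \<Longrightarrow> Y $$ (r, i) = e i ^ r * Y $$ (0, i)"
    and l: "l \<le> 2*s"
  shows "a l = (\<Sum>i<s+1. (Y $$ (0,i))^2 * e i ^ l)"
proof -
  define j where "j = min l s"
  have jk: "j \<le> s" "l - j \<le> s" "j + (l - j) = l" using l unfolding j_def by auto
  have "a l = (Y * Y\<^sup>T) $$ (j, l - j)" unfolding YY hankel_def using jk by simp
  also have "\<dots> = (\<Sum>i<s+1. Y $$ (j,i) * Y $$ (l - j,i))"
    using jk Yc by (simp add: scalar_prod_def atLeast0LessThan del: sum.lessThan_Suc)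
  also have "\<dots> = (\<Sum>i<s+1. (Y $$ (0,i))^2 * e i ^ l)"
  proof (intro sum.cong refl)
    fix i assume "i \<in> {..<s+1}"
    hence "Y $$ (j,i) = e i ^ j * Y $$ (0,i)" "Y $$ (l - j,i) = e i ^ (l - j) * Y $$ (0,i)"
      using jk by (auto intro: Y_pow)
    moreover have "e i ^ l = e i ^ j * e i ^ (l - j)" unfolding power_add[symmetric] jk(3) ..
    ultimately show "Y $$ (j,i) * Y $$ (l - j,i) = (Y $$ (0,i))^2 * e i ^ l"
      by (simp only: power2_eq_square mult_ac)
  qed
  finally show ?thesis .
qed

text \<open>A positive definite catalecticant comes from s+1 nonnegative terms: simultaneously
  diagonalising (H, shifted H) gives Y = H X with H = Y Y^T and geometric rows, hence
  a_{j+k} = sum_i Y_{0,i}^2 e_i^{j+k} (the classical Gauss quadrature argument).\<close>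
lemma pos_def_hankel_rep:
  assumes npos: "num_pos_eig (hankel s a) = s + 1"
  shows "\<exists>T. (\<forall>t\<in>set T. fst t \<ge> 0) \<and> length T = s + 1 \<and> (\<forall>j\<le>2*s. a j = coefs (2*s) T j)"
proof -
  define n where "n = s + 1"
  define H where "H = hankel s a"
  define K where "K = shifted_hankel s a"
  have Hc: "H \<in> carrier_mat n n" unfolding H_def n_def by (rule hankel_carrier(1))
  have Kc: "K \<in> carrier_mat n n" unfolding K_def n_def shifted_hankel_def by simp
  have symK: "K\<^sup>T = K" unfolding K_def shifted_hankel_def by (rule eq_matI) (auto simp: add.commute)
  obtain P D where HPD: "orth_diag n H P D" using hankel_orth_diag unfolding H_def n_def by blast
  have pos: "\<forall>e\<in>set (orth_diag.eigs D). e > 0"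
    using orth_diag.eigs_pos_if_num_pos_full[OF HPD] npos unfolding H_def n_def by blast
  obtain X E where Xc: "X \<in> carrier_mat n n" and XHX: "X\<^sup>T * H * X = 1\<^sub>m n"
    and Ec: "E \<in> carrier_mat n n" and Ediag: "diagonal_mat E" and XKX: "X\<^sup>T * K * X = E"
    using simultaneous_diag[OF HPD pos Kc symK] by blast
  define Y where "Y = H * X"
  have YY: "Y * Y\<^sup>T = H" and KX: "K * X = Y * E"
    using pencil_factorisation[OF Hc hankel_sym[of s a, folded H_def] Kc Xc XHX XKX]
    unfolding Y_def by auto
  have Yc: "Y \<in> carrier_mat n n" unfolding Y_def using Hc Xc by simp
  define e where "e i = E $$ (i,i)" for i
  have Y_pow: "Y $$ (r, i) = e i ^ r * Y $$ (0, i)" if "r \<le> s" "i < s+1" for r i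
    unfolding e_def by (rule hankel_pencil_rows[OF Xc[unfolded n_def] Ec[unfolded n_def] Ediag])
      (use that KX in \<open>auto simp: Y_def H_def K_def n_def\<close>)
  have a_moment: "a l = (\<Sum>i<n. (Y $$ (0,i))^2 * e i ^ l)" if "l \<le> 2*s" for l
    unfolding n_def by (rule hankel_moments[OF Yc[unfolded n_def] YY[unfolded H_def] Y_pow that])
  define T where "T = map (\<lambda>i. ((Y $$ (0,i))^2, 1::real, e i)) [0..<n]"
  have "a l = coefs (2*s) T l" if "l \<le> 2*s" for l
    unfolding a_moment[OF that] T_def coefs_def
    by (simp add: interv_sum_list_conv_sum_set_nat atLeast0LessThan comp_def)
  moreover have "\<forall>t\<in>set T. fst t \<ge> 0" "length T = s + 1" unfolding T_def n_def by auto
  ultimately show ?thesis by blast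
qed

lemma num_pos_eig_hankel_le: "num_pos_eig (hankel s a) \<le> s + 1"
proof -
  obtain P D where "orth_diag (s+1) (hankel s a) P D" using hankel_orth_diag by blast
  then interpret H: orth_diag "s+1" "hankel s a" P D .
  show ?thesis using H.num_pos_eig_eq H.len_eigs length_filter_le[of "\<lambda>e. e > 0" H.eigs] by simp
qed

lemma rank_H_no_neg:
  assumes "num_neg_eig (hankel s a) = 0"
  shows "rank_H s a = num_pos_eig (hankel s a)"
proof -
  obtain P D where "orth_diag (s+1) (hankel s a) P D" using hankel_orth_diag by blast
  then interpret H: orth_diag "s+1" "hankel s a" P D .
  have "\<forall>e\<in>set H.eigs. e \<ge> 0"
    using assms H.num_neg_eig_eq by (auto simp: filter_empty_conv)
  hence "filter (\<lambda>e. e \<noteq> 0) H.eigs = filter (\<lambda>e. e > 0) H.eigs"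
    by (intro filter_cong) auto
  thus ?thesis unfolding rank_H_def H.rank_eq_num_nonzero H.num_pos_eig_eq by simp
qed

lemma pos_honest_repr_of_nonneg:
  assumes s: "s \<ge> 1" and T: "\<forall>t\<in>set T. fst t \<ge> 0" "\<forall>j\<le>2*s. a j = coefs (2*s) T j"
  shows "\<exists>R. is_repr s a R \<and> pos_honest R \<and> length R \<le> length T"
proof -
  obtain R where R: "pos_honest R" "length R \<le> length T"
    "\<forall>j\<le>2*s. coefs (2*s) R j = coefs (2*s) T j"
    using pos_honest_of_nonneg[OF T(1) s] by blast
  have "is_repr s a R" unfolding is_repr_iff using R(1,3) T(2) unfolding pos_honest_def by auto
  thus ?thesis using R by blast
qed

text \<open>A form in Q has an honest positive representation with at most s+1 terms: an arbitrary
  sum of powers can be made honest, and if it is still longer than s+1, the lower inertia bound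
  forces a positive definite catalecticant, which yields a representation of length s+1.\<close>
lemma in_Q_short_rep:
  assumes s: "s \<ge> 1" and Q: "in_Q s a"
  shows "\<exists>R. is_repr s a R \<and> pos_honest R \<and> length R \<le> s + 1"
proof -
  obtain L where L: "is_repr s a (map (\<lambda>l. (1, l)) L)" using in_Q_repr[OF Q] by blast
  have "\<forall>t\<in>set (map (\<lambda>l. (1::real, l)) L). fst t \<ge> 0" by auto
  moreover have "\<forall>j\<le>2*s. a j = coefs (2*s) (map (\<lambda>l. (1, l)) L) j" using L is_repr_iff by blast
  ultimately obtain R where R: "is_repr s a R" "pos_honest R"
    using pos_honest_repr_of_nonneg[OF s] by blast
  show ?thesis
  proof (cases "length R \<le> s + 1")
    case True thus ?thesis using R by blast
  next
    case False
    have "s + 1 \<le> num_pos_eig (hankel s a)"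
      by (rule num_pos_eig_ge[OF R(1), of "s+1"])
        (use R(2) False in \<open>auto simp: pos_honest_def honest_def intro!: nth_mem\<close>)
    hence "num_pos_eig (hankel s a) = s + 1" using num_pos_eig_hankel_le[of s a] by simp
    from pos_def_hankel_rep[OF this] obtain T where
      T: "\<forall>t\<in>set T. fst t \<ge> 0" "length T = s + 1" "\<forall>j\<le>2*s. a j = coefs (2*s) T j" by blast
    from pos_honest_repr_of_nonneg[OF s T(1,3)] T(2) show ?thesis by auto
  qed
qed

lemma signatures_least:
  assumes w: "w \<in> badges s a" and least: "\<forall>v\<in>badges s a. badge_le w v"
  shows "signatures s a = {w}"
proof -
  have "v = w" if "v \<in> badges s a" "badge_le v w" for v
    using least that unfolding badge_le_def by (auto simp: prod_eq_iff)
  moreover have "u = w" if "u \<in> signatures s a" for u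
    using that w least unfolding signatures_def by auto
  ultimately show ?thesis using w unfolding signatures_def by auto
qed

lemma signature_in_Q:
  assumes s: "s \<ge> 1" and Q: "in_Q s a"
  shows "signatures s a = {sig_H s a} \<and> sig_H s a = (rank_H s a, 0)"
proof -
  obtain L where "is_repr s a (map (\<lambda>l. (1, l)) L)" using in_Q_repr[OF Q] by blast
  from num_neg_eig_le_badge[OF this] have nneg: "num_neg_eig (hankel s a) = 0"
    unfolding badge_def by (simp add: filter_empty_conv)
  obtain R where R: "is_repr s a R" "pos_honest R" "length R \<le> s + 1"
    using in_Q_short_rep[OF s Q] by blast
  have sig: "sig_H s a = (length R, 0)" "rank_H s a = length R"
    using num_pos_eig_short_rep[OF R] nneg rank_H_no_neg[OF nneg] unfolding sig_H_def by simp_all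
  have "honest R" using R(2) unfolding pos_honest_def by simp
  moreover have "badge R = sig_H s a" using badge_pos_honest[OF R(2)] sig by simp
  ultimately have "sig_H s a \<in> badges s a" using R(1) unfolding badges_def by (auto intro!: exI[of _ R])
  thus ?thesis using signatures_least sig_H_le_badges sig by metis
qed

lemma signature_if_tight:
  assumes u: "u \<in> badges s a" and tight: "fst u + snd u = fst (sig_H s a) + snd (sig_H s a)"
  shows "signatures s a = {sig_H s a}"
proof -
  have "u = sig_H s a" using sig_H_le_badges[OF u] tight unfolding badge_le_def by (simp add: prod_eq_iff)
  thus ?thesis using signatures_least u sig_H_le_badges by metis
qed

theorem corollary2p10:
  fixes s :: nat and a :: "nat \<Rightarrow> real" and pH nH :: nat
  assumes "s \<ge> 1"
    and "sig_H s a = (pH, nH)"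
  shows "(\<forall>u \<in> badges s a. pH \<le> fst u \<and> nH \<le> snd u)
    \<and> (in_Q s a \<longrightarrow> signatures s a = {sig_H s a} \<and> sig_H s a = (rank_H s a, 0))
    \<and> ((\<exists>u \<in> badges s a. fst u + snd u = pH + nH \<and> pH + nH = rank_H s a)
           \<longrightarrow> signatures s a = {sig_H s a})"
proof -
  have "\<forall>u \<in> badges s a. pH \<le> fst u \<and> nH \<le> snd u"
    using sig_H_le_badges assms(2) unfolding badge_le_def by fastforce
  moreover have "in_Q s a \<longrightarrow> signatures s a = {sig_H s a} \<and> sig_H s a = (rank_H s a, 0)"
    using signature_in_Q[OF assms(1)] by blast
  moreover have "(\<exists>u \<in> badges s a. fst u + snd u = pH + nH \<and> pH + nH = rank_H s a)
           \<longrightarrow> signatures s a = {sig_H s a}"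
    using signature_if_tight assms(2) by fastforce
  ultimately show ?thesis by blast
qed

end
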